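(* Let $p\in\{2,3\}$ and let $\alpha=\frac{P+\sqrt D}{Q}\in\mathbb{Q}_p$, where $P,Q\in\mathbb{Z}$, $Q\neq0$, and $D$ is a non-square integer with $\sqrt D\in\mathbb{Q}_p$ (so $\alpha$ is a quadratic irrational). Then both Algorithm A and Algorithm B (defined in the context) expand $\alpha$ as an ultimately periodic continued fraction, i.e. there exist $N\ge0$ and $k\ge1$ with $b_{n+k}=b_n$ for all $n\ge N$.
   Context: Fix a prime $p$. Let $\mathcal{R}=\{-\frac{p-1}{2},\dots,0,\dots,\frac{p-1}{2}\}$ if $p$ is odd, and $\mathcal{R}=\{0,1\}$ if $p=2$. Every nonzero $\alpha\in\mathbb{Q}_p$ is written uniquely as $\alpha=\sum_{n\ge r}a_np^n$ with $r=v_p(\alpha)$, all $a_n\in\mathcal{R}$, $a_r\neq 0$. Put $s(\alpha)=\sum_{n=r}^{0}a_np^n$ and $t(\alpha)=\sum_{n=r}^{-1}a_np^n$ (empty sums are $0$). For an algebraic number $\alpha\in\mathbb{Q}_p$ whose minimal polynomial over $\mathbb{Q}$ has degree $d$, let $\operatorname{Tr}(\alpha)$ be its trace over $\mathbb{Q}$ and $\operatorname{round}(x)$ the integer nearest to the real number $x$. Define $\bar s(\alpha)=\operatorname{round}\!\left(\frac{\operatorname{Tr}(\alpha)/d-s(\alpha)}{p}\right)p+s(\alpha)$ and $\bar t(\alpha)=\operatorname{round}\!\left(\operatorname{Tr}(\alpha)/d-t(\alpha)\right)+t(\alpha)$. (For $\alpha=\frac{P+\sqrt D}{Q}$ as in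 the claim, $\operatorname{Tr}(\alpha)/d=P/Q$.) An expansion algorithm starts with $\alpha_0=\alpha$; at step $n$ it chooses $b_n$ by a rule; if $\alpha_n=b_n$ it stops, otherwise it sets $\alpha_{n+1}=\frac{1}{\alpha_n-b_n}$ and continues, producing $[b_0,b_1,\dots]=b_0+\cfrac{1}{b_1+\cfrac{1}{b_2+\cdots}}$. Algorithm A: $b_0=\bar s(\alpha_0)$; for $n\ge1$, $b_n=\bar s(\alpha_n)$ if $v_p(\alpha_n)=0$ and $b_n=\bar t(\alpha_n)$ if $v_p(\alpha_n)<0$. Algorithm B: $b_n=\bar s(\alpha_n)$ if $n$ is even and $b_n=\bar t(\alpha_n)$ if $n$ is odd. *)

theory Defs
  imports Complex_Main "HOL-Computational_Algebra.Primes"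
begin

definition pval :: "nat \<Rightarrow> rat \<Rightarrow> int" where
  "pval p x = (case quotient_of x of (n, d) \<Rightarrow>
      int (multiplicity (int p) n) - int (multiplicity (int p) d))"

definition pdiv_ge :: "nat \<Rightarrow> int \<Rightarrow> rat \<Rightarrow> bool" where
  "pdiv_ge p N x \<longleftrightarrow> x = 0 \<or> pval p x \<ge> N"

definition padic_cauchy :: "nat \<Rightarrow> (nat \<Rightarrow> rat) \<Rightarrow> bool" where
  "padic_cauchy p A \<longleftrightarrow> (\<forall>N. \<exists>M. \<forall>m\<ge>M. \<forall>n\<ge>M. pdiv_ge p N (A m - A n))"

definition padic_tendsto :: "nat \<Rightarrow> (nat \<Rightarrow> rat) \<Rightarrow> rat \<Rightarrow> bool" where
  "padic_tendsto p A q \<longleftrightarrow> (\<forall>N. \<forall>\<^sub>F m in sequentially. pdiv_ge p N (A m - q))"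

text \<open>For the p-adic number x = lim A: v_p(x - q) >= N.\<close>
definition padic_close :: "nat \<Rightarrow> (nat \<Rightarrow> rat) \<Rightarrow> rat \<Rightarrow> int \<Rightarrow> bool" where
  "padic_close p A q N \<longleftrightarrow> (\<forall>\<^sub>F m in sequentially. pdiv_ge p N (A m - q))"

definition digit_set :: "nat \<Rightarrow> int set" where
  "digit_set p = (if p = 2 then {0, 1} else {- ((int p - 1) div 2) .. (int p - 1) div 2})"

text \<open>a is the digit sequence of x = lim A (x nonzero), r = v_p(x):
  x = sum_{n>=r} a_n p^n with a_n in the digit set, a_r nonzero.\<close>
definition is_digit_exp :: "nat \<Rightarrow> (nat \<Rightarrow> rat) \<Rightarrow> (int \<Rightarrow> int) \<Rightarrow> int \<Rightarrow> bool" where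
  "is_digit_exp p A a r \<longleftrightarrow>
     (\<forall>n. a n \<in> digit_set p) \<and> (\<forall>n<r. a n = 0) \<and> a r \<noteq> 0 \<and>
     (\<forall>N\<ge>r. padic_close p A (\<Sum>n\<in>{r..<N}. of_int (a n) * (of_nat p :: rat) powi n) N)"

definition padic_val :: "nat \<Rightarrow> (nat \<Rightarrow> rat) \<Rightarrow> int" where
  "padic_val p A = (THE r. \<exists>a. is_digit_exp p A a r)"

definition padic_digits :: "nat \<Rightarrow> (nat \<Rightarrow> rat) \<Rightarrow> int \<Rightarrow> int" where
  "padic_digits p A = (THE a. \<exists>r. is_digit_exp p A a r)"

definition padic_s :: "nat \<Rightarrow> (nat \<Rightarrow> rat) \<Rightarrow> rat" where
  "padic_s p A = (\<Sum>n\<in>{padic_val p A..0}. of_int (padic_digits p A n) * (of_nat p :: rat) powi n)"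

definition padic_t :: "nat \<Rightarrow> (nat \<Rightarrow> rat) \<Rightarrow> rat" where
  "padic_t p A = (\<Sum>n\<in>{padic_val p A..-1}. of_int (padic_digits p A n) * (of_nat p :: rat) powi n)"

text \<open>A pair (a, b) represents a + b sqrt D. The embedding into Q_p is fixed by a
  p-adic Cauchy sequence r of rationals converging to a square root of D.\<close>

type_synonym qsqrt = "rat \<times> rat"

definition qs_inv :: "int \<Rightarrow> qsqrt \<Rightarrow> qsqrt" where
  "qs_inv D x = (let (a, b) = x; n = a^2 - of_int D * b^2 in (a / n, - b / n))"

definition qs_sub_rat :: "qsqrt \<Rightarrow> rat \<Rightarrow> qsqrt" where
  "qs_sub_rat x c = (fst x - c, snd x)"

definition qs_approx :: "(nat \<Rightarrow> rat) \<Rightarrow> qsqrt \<Rightarrow> nat \<Rightarrow> rat" where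
  "qs_approx r x = (\<lambda>m. fst x + snd x * r m)"

text \<open>Tr(x)/d for x = a + b sqrt D (D non-square) is a.\<close>
definition qs_trace_avg :: "qsqrt \<Rightarrow> rat" where
  "qs_trace_avg x = fst x"

definition s_bar :: "nat \<Rightarrow> (nat \<Rightarrow> rat) \<Rightarrow> qsqrt \<Rightarrow> rat" where
  "s_bar p r x = (let s = padic_s p (qs_approx r x) in
     of_int (round ((qs_trace_avg x - s) / of_nat p)) * of_nat p + s)"

definition t_bar :: "nat \<Rightarrow> (nat \<Rightarrow> rat) \<Rightarrow> qsqrt \<Rightarrow> rat" where
  "t_bar p r x = (let t = padic_t p (qs_approx r x) in
     of_int (round (qs_trace_avg x - t)) + t)"

definition ruleA :: "nat \<Rightarrow> (nat \<Rightarrow> rat) \<Rightarrow> nat \<Rightarrow> qsqrt \<Rightarrow> rat" where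
  "ruleA p r n x = (if n = 0 then s_bar p r x
     else if padic_val p (qs_approx r x) = 0 then s_bar p r x
     else if padic_val p (qs_approx r x) < 0 then t_bar p r x
     else undefined)"

definition ruleB :: "nat \<Rightarrow> (nat \<Rightarrow> rat) \<Rightarrow> nat \<Rightarrow> qsqrt \<Rightarrow> rat" where
  "ruleB p r n x = (if even n then s_bar p r x else t_bar p r x)"

text \<open>The sequence alpha_n (ignoring termination; termination at step n means
  alpha_n = b_n, i.e. alpha_n = (b_n, 0)).\<close>
fun cf_alpha :: "int \<Rightarrow> (nat \<Rightarrow> qsqrt \<Rightarrow> rat) \<Rightarrow> qsqrt \<Rightarrow> nat \<Rightarrow> qsqrt" where
  "cf_alpha D rule x 0 = x"
| "cf_alpha D rule x (Suc n) =
     (let y = cf_alpha D rule x n in qs_inv D (qs_sub_rat y (rule n y)))"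

definition cf_b :: "int \<Rightarrow> (nat \<Rightarrow> qsqrt \<Rightarrow> rat) \<Rightarrow> qsqrt \<Rightarrow> nat \<Rightarrow> rat" where
  "cf_b D rule x n = rule n (cf_alpha D rule x n)"

definition cf_ult_periodic :: "int \<Rightarrow> (nat \<Rightarrow> qsqrt \<Rightarrow> rat) \<Rightarrow> qsqrt \<Rightarrow> bool" where
  "cf_ult_periodic D rule x \<longleftrightarrow>
     (\<forall>n. cf_alpha D rule x n \<noteq> (cf_b D rule x n, 0)) \<and>
     (\<exists>N k. k \<ge> 1 \<and> (\<forall>n\<ge>N. cf_b D rule x (n + k) = cf_b D rule x n))"

end

theory Submission
  imports Defs "HOL-Number_Theory.Cong"
begin

text \<open>Write \<open>\<alpha>\<^sub>n = (P\<^sub>n + \<surd>(D Q\<^sup>2)) / Q\<^sub>n\<close>. Every partial quotient \<open>b\<^sub>n\<close> has a power of p as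
  denominator and is p-adically close to \<open>\<alpha>\<^sub>n\<close> (modulo p for \<open>s_bar\<close>, modulo \<open>\<int>\<^sub>p\<close> for \<open>t_bar\<close>).
  This keeps \<open>P\<^sub>n\<close> and \<open>Q\<^sub>n\<close> integers with \<open>Q\<^sub>n dvd D Q\<^sup>2 - P\<^sub>n\<^sup>2\<close>, and makes the valuation of
  \<open>\<alpha>\<^sub>n\<^sub>+\<^sub>1 = 1 / (\<alpha>\<^sub>n - b\<^sub>n)\<close> negative after an \<open>s_bar\<close> step and nonpositive after a \<open>t_bar\<close> step,
  so both algorithms never use \<open>s_bar\<close> twice in a row. In the real absolute value,
  \<open>\<bar>b\<^sub>n - P\<^sub>n / Q\<^sub>n\<bar>\<close> is at most p/2 resp. 1/2, and \<open>Q\<^sub>n Q\<^sub>n\<^sub>+\<^sub>1 = D Q\<^sup>2 - P\<^sub>n\<^sub>+\<^sub>1\<^sup>2\<close> gives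
  \<open>\<bar>Q\<^sub>n\<^sub>+\<^sub>1\<bar> \<le> \<bar>D\<bar> Q\<^sup>2 + (b\<^sub>n - P\<^sub>n / Q\<^sub>n)\<^sup>2 \<bar>Q\<^sub>n\<bar>\<close>. Over two steps the factor is at most
  \<open>p\<^sup>2 / 16 < 1\<close> for \<open>p \<le> 3\<close>, so \<open>P\<^sub>n\<close> and \<open>Q\<^sub>n\<close> stay bounded, the \<open>\<alpha>\<^sub>n\<close> take finitely many
  values, and the expansion is ultimately periodic.\<close>

section \<open>The p-adic valuation on the rationals\<close>

lemma power_int_split:
  fixes x :: "'a :: field"
  assumes x: "x \<noteq> 0" and jn: "j \<le> n"
  shows "x powi n = x powi j * x ^ nat (n - j)"
proof -
  have "x powi n = x powi (j + (n - j))" by simp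
  also have "\<dots> = x powi j * x powi (n - j)" by (rule power_int_add) (simp add: x)
  also have "\<dots> = x powi j * x ^ nat (n - j)" using jn by (simp add: power_int_def)
  finally show ?thesis .
qed

lemma divide_power_nat_eq_power_int:
  fixes x :: "'a :: field"
  assumes x: "x \<noteq> 0" and v: "v \<le> 0"
  shows "y / x ^ nat (- v) = x powi v * y"
proof -
  have "x powi v = inverse (x powi (- v))" by (simp add: power_int_minus)
  also have "\<dots> = inverse (x ^ nat (- v))" using v by (simp add: power_int_def)
  finally show ?thesis by (simp add: field_simps)
qed

lemma pval_of_int_divide:
  assumes p: "prime p" and u: "u \<noteq> 0" and w: "w \<noteq> 0"
  shows "pval p (of_int u / of_int w) = int (multiplicity (int p) u) - int (multiplicity (int p) w)"
proof -
  obtain n d where q: "quotient_of (of_int u / of_int w) = (n, d)"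
    by (cases "quotient_of (of_int u / of_int w :: rat)")
  have d: "d > 0" using q quotient_of_denom_pos by blast
  have e: "(of_int u / of_int w :: rat) = of_int n / of_int d" using quotient_of_div[OF q] .
  have n: "n \<noteq> 0" using e u w d by auto
  have "of_int (u * d) = (of_int (n * w) :: rat)" using e w d by (simp add: field_simps)
  then have "multiplicity (int p) (u * d) = multiplicity (int p) (n * w)" by (simp only: of_int_eq_iff)
  moreover have "prime_elem (int p)" using p by simp
  ultimately have "multiplicity (int p) u + multiplicity (int p) d = multiplicity (int p) n + multiplicity (int p) w"
    using prime_elem_multiplicity_mult_distrib u w n d by (metis less_irrefl)
  then show ?thesis unfolding pval_def q by simp
qed

lemma pval_mult:
  assumes p: "prime p" and x: "x \<noteq> 0" and y: "y \<noteq> 0"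
  shows "pval p (x * y) = pval p x + pval p y"
proof -
  obtain n1 d1 where q1: "quotient_of x = (n1, d1)" by (cases "quotient_of x")
  obtain n2 d2 where q2: "quotient_of y = (n2, d2)" by (cases "quotient_of y")
  have d: "d1 > 0" "d2 > 0" using q1 q2 quotient_of_denom_pos by blast+
  have x_eq: "x = of_int n1 / of_int d1" and y_eq: "y = of_int n2 / of_int d2"
    using quotient_of_div[OF q1] quotient_of_div[OF q2] .
  have n: "n1 \<noteq> 0" "n2 \<noteq> 0" using x_eq y_eq x y by auto
  have "x * y = of_int (n1 * n2) / of_int (d1 * d2)" using x_eq y_eq by simp
  then have "pval p (x * y) = int (multiplicity (int p) (n1 * n2)) - int (multiplicity (int p) (d1 * d2))"
    using pval_of_int_divide[OF p, of "n1 * n2" "d1 * d2"] n d by (simp del: of_int_mult)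
  also have "\<dots> = pval p x + pval p y"
    using prime_elem_multiplicity_mult_distrib[of "int p"] p n d
    unfolding pval_def q1 q2 by (simp add: prime_nat_iff_prime)
  finally show ?thesis .
qed

lemma pval_one: "prime p \<Longrightarrow> pval p 1 = 0"
  using pval_of_int_divide[of p 1 1] by simp

lemma pval_power_int:
  assumes p: "prime p"
  shows "pval p (of_nat p powi k) = k"
proof -
  have "(of_nat p :: rat) powi k = of_int (int p ^ nat k) / of_int (int p ^ nat (- k))"
    by (cases "k \<ge> 0") (simp_all add: power_int_def field_simps)
  moreover have "int p ^ nat k \<noteq> 0" "int p ^ nat (- k) \<noteq> 0" using p by (simp_all add: prime_gt_0_nat)
  moreover have "prime_elem (int p)" using p by simp
  ultimately show ?thesis using pval_of_int_divide[OF p] by (simp del: of_int_power)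
qed

lemma pval_decompose:
  assumes p: "prime p" and x: "x \<noteq> 0"
  obtains u w where "\<not> int p dvd u" "\<not> int p dvd w" "x = of_int u * of_nat p powi pval p x / of_int w"
proof -
  obtain n d where q: "quotient_of x = (n, d)" by (cases "quotient_of x")
  have d: "d > 0" using q quotient_of_denom_pos by blast
  have x_eq: "x = of_int n / of_int d" using quotient_of_div[OF q] .
  have "n \<noteq> 0" using x_eq x by auto
  have nu: "\<not> is_unit (int p)" using p prime_gt_1_nat by fastforce
  define i where "i = multiplicity (int p) n"
  define j where "j = multiplicity (int p) d"
  obtain n' where n': "n = int p ^ i * n'" "\<not> int p dvd n'"
    using multiplicity_decompose'[of n "int p"] \<open>n \<noteq> 0\<close> nu unfolding i_def by blast
  obtain d' where d': "d = int p ^ j * d'" "\<not> int p dvd d'"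
    using multiplicity_decompose'[of d "int p"] d nu unfolding j_def by (metis less_irrefl)
  have pp: "(of_nat p :: rat) \<noteq> 0" using p by (simp add: prime_gt_0_nat)
  have vij: "pval p x = int i - int j" unfolding pval_def q i_def j_def by simp
  have "x = of_int n' * (of_nat p ^ i / of_nat p ^ j) / of_int d'"
    using x_eq n'(1) d'(1) pp by simp
  also have "of_nat p ^ i / of_nat p ^ j = (of_nat p :: rat) powi pval p x"
    using pp vij by (simp add: power_int_diff)
  finally have "x = of_int n' * of_nat p powi pval p x / of_int d'" by simp
  then show ?thesis using n'(2) d'(2) that by blast
qed

lemma pdiv_ge_iff_fraction:
  assumes p: "prime p"
  shows "pdiv_ge p N x \<longleftrightarrow> (\<exists>u w. \<not> int p dvd w \<and> x = of_int u * of_nat p powi N / of_int w)"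
proof
  assume h: "pdiv_ge p N x"
  show "\<exists>u w. \<not> int p dvd w \<and> x = of_int u * of_nat p powi N / of_int w"
  proof (cases "x = 0")
    case True
    then show ?thesis using p by (intro exI[of _ 0] exI[of _ 1]) (auto simp: prime_gt_1_nat)
  next
    case False
    then have v: "N \<le> pval p x" using h unfolding pdiv_ge_def by auto
    obtain u w where w: "\<not> int p dvd w" and x: "x = of_int u * of_nat p powi pval p x / of_int w"
      using pval_decompose[OF p False] by blast
    have pp: "(of_nat p :: rat) \<noteq> 0" using p by (simp add: prime_gt_0_nat)
    have "x = of_int u * (of_nat p powi N * of_nat p ^ nat (pval p x - N)) / of_int w"
      using x unfolding power_int_split[OF pp v] .
    then have "x = of_int (u * int p ^ nat (pval p x - N)) * of_nat p powi N / of_int w"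
      by (simp add: ac_simps)
    then show ?thesis using w by blast
  qed
next
  assume "\<exists>u w. \<not> int p dvd w \<and> x = of_int u * of_nat p powi N / of_int w"
  then obtain u w where w: "\<not> int p dvd w" and x: "x = of_int u / of_int w * of_nat p powi N"
    by auto
  show "pdiv_ge p N x"
  proof (cases "u = 0")
    case True then show ?thesis using x unfolding pdiv_ge_def by simp
  next
    case False
    have "w \<noteq> 0" "(of_nat p :: rat) \<noteq> 0" using w p by (auto simp: prime_gt_0_nat)
    then have "pval p x = pval p (of_int u / of_int w) + pval p (of_nat p powi N)"
      unfolding x using False by (intro pval_mult[OF p]) auto
    also have "\<dots> = int (multiplicity (int p) u) + N"
      using pval_of_int_divide[OF p False \<open>w \<noteq> 0\<close>] pval_power_int[OF p]
        not_dvd_imp_multiplicity_0[OF w] by simp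
    finally show ?thesis unfolding pdiv_ge_def by simp
  qed
qed

lemma pdiv_ge_0 [simp]: "pdiv_ge p N 0"
  unfolding pdiv_ge_def by simp

lemma pdiv_ge_pval: "x \<noteq> 0 \<Longrightarrow> pdiv_ge p (pval p x) x"
  unfolding pdiv_ge_def by simp

lemma pdiv_ge_mono: "pdiv_ge p N x \<Longrightarrow> M \<le> N \<Longrightarrow> pdiv_ge p M x"
  unfolding pdiv_ge_def by auto

lemma pdiv_ge_all_imp_zero:
  assumes "\<And>N. pdiv_ge p N x" shows "x = 0"
proof (rule ccontr)
  assume "x \<noteq> 0"
  with assms[of "pval p x + 1"] show False unfolding pdiv_ge_def by simp
qed

lemma pdiv_ge_add:
  assumes p: "prime p" and x: "pdiv_ge p N x" and y: "pdiv_ge p N y"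
  shows "pdiv_ge p N (x + y)"
proof -
  obtain u1 w1 where 1: "\<not> int p dvd w1" "x = of_int u1 * of_nat p powi N / of_int w1"
    using x pdiv_ge_iff_fraction[OF p] by blast
  obtain u2 w2 where 2: "\<not> int p dvd w2" "y = of_int u2 * of_nat p powi N / of_int w2"
    using y pdiv_ge_iff_fraction[OF p] by blast
  have "prime (int p)" using p by simp
  then have "\<not> int p dvd (w1 * w2)" using 1 2 prime_dvd_mult_iff by blast
  moreover have "w1 \<noteq> 0" "w2 \<noteq> 0" using 1 2 by auto
  then have "x + y = of_int (u1 * w2 + u2 * w1) * of_nat p powi N / of_int (w1 * w2)"
    using 1 2 by (simp add: field_simps)
  ultimately show ?thesis using pdiv_ge_iff_fraction[OF p] by blast
qed

lemma pdiv_ge_uminus: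
  assumes p: "prime p" and x: "pdiv_ge p N x"
  shows "pdiv_ge p N (- x)"
proof -
  obtain u w where "\<not> int p dvd w" "x = of_int u * of_nat p powi N / of_int w"
    using x pdiv_ge_iff_fraction[OF p] by blast
  then have "\<not> int p dvd w \<and> - x = of_int (- u) * of_nat p powi N / of_int w" by simp
  then show ?thesis using pdiv_ge_iff_fraction[OF p] by blast
qed

lemma pdiv_ge_diff: "prime p \<Longrightarrow> pdiv_ge p N x \<Longrightarrow> pdiv_ge p N y \<Longrightarrow> pdiv_ge p N (x - y)"
  using pdiv_ge_add[of p N x "- y"] pdiv_ge_uminus[of p N y] by simp

lemma pdiv_ge_mult:
  assumes p: "prime p" and x: "pdiv_ge p N x" and y: "pdiv_ge p M y"
  shows "pdiv_ge p (N + M) (x * y)"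
proof -
  obtain u1 w1 where 1: "\<not> int p dvd w1" "x = of_int u1 * of_nat p powi N / of_int w1"
    using x pdiv_ge_iff_fraction[OF p] by blast
  obtain u2 w2 where 2: "\<not> int p dvd w2" "y = of_int u2 * of_nat p powi M / of_int w2"
    using y pdiv_ge_iff_fraction[OF p] by blast
  have "prime (int p)" using p by simp
  then have "\<not> int p dvd (w1 * w2)" using 1 2 prime_dvd_mult_iff by blast
  moreover have "(of_nat p :: rat) \<noteq> 0" using p by (simp add: prime_gt_0_nat)
  then have "x * y = of_int (u1 * u2) * of_nat p powi (N + M) / of_int (w1 * w2)"
    using 1 2 by (simp add: power_int_add)
  ultimately show ?thesis using pdiv_ge_iff_fraction[OF p] by blast
qed

lemma pdiv_ge_of_int:
  assumes p: "prime p" shows "pdiv_ge p 0 (of_int z)"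
proof -
  have "\<not> int p dvd 1" "(of_int z :: rat) = of_int z * of_nat p powi 0 / of_int 1"
    using p prime_gt_1_nat by auto
  then show ?thesis using pdiv_ge_iff_fraction[OF p] by blast
qed

lemma pdiv_ge_power_int: "prime p \<Longrightarrow> pdiv_ge p k (of_nat p powi k)"
  using pval_power_int[of p k] unfolding pdiv_ge_def by simp

lemma pdiv_ge_power_int_mult_iff:
  assumes p: "prime p"
  shows "pdiv_ge p N (of_nat p powi k * x) \<longleftrightarrow> pdiv_ge p (N - k) x"
proof
  assume "pdiv_ge p N (of_nat p powi k * x)"
  from pdiv_ge_mult[OF p this pdiv_ge_power_int[OF p, of "- k"]]
  have "pdiv_ge p (N - k) (inverse (of_nat p powi k) * (of_nat p powi k * x))"
    by (simp add: power_int_minus mult.commute)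
  moreover have "(of_nat p :: rat) powi k \<noteq> 0" using p by (simp add: prime_gt_0_nat)
  then have "inverse (of_nat p powi k) * (of_nat p powi k * x) = x" by (simp add: field_simps)
  ultimately show "pdiv_ge p (N - k) x" by simp
next
  assume "pdiv_ge p (N - k) x"
  from pdiv_ge_mult[OF p pdiv_ge_power_int[OF p, of k] this]
  show "pdiv_ge p N (of_nat p powi k * x)" by simp
qed

lemma pdiv_ge_p_mult_iff: "prime p \<Longrightarrow> pdiv_ge p N (of_nat p * x) \<longleftrightarrow> pdiv_ge p (N - 1) x"
  using pdiv_ge_power_int_mult_iff[of p N 1 x] by simp

lemma pdiv_ge_mult_left:
  assumes p: "prime p" and b: "b \<noteq> 0" and x: "pdiv_ge p (N - pval p b) x"
  shows "pdiv_ge p N (b * x)"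
  using pdiv_ge_mult[OF p pdiv_ge_pval[OF b] x] by simp

lemma pdiv_ge_mult_cancel_right:
  assumes p: "prime p" and y: "y \<noteq> 0" and xy: "pdiv_ge p N (x * y)"
  shows "pdiv_ge p (N - pval p y) x"
proof (cases "x = 0")
  case False
  then have "pval p (x * y) = pval p x + pval p y" "x * y \<noteq> 0"
    using pval_mult[OF p False y] y by simp_all
  then show ?thesis using xy unfolding pdiv_ge_def by auto
qed simp

lemma pval_add_eq:
  assumes p: "prime p" and x: "x \<noteq> 0" and y: "pdiv_ge p (pval p x + 1) y"
  shows "x + y \<noteq> 0 \<and> pval p (x + y) = pval p x"
proof -
  have "pdiv_ge p (pval p x) (x + y)"
    using pdiv_ge_add[OF p pdiv_ge_pval[OF x] pdiv_ge_mono[OF y]] by simp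
  moreover have "\<not> pdiv_ge p (pval p x + 1) (x + y)"
  proof
    assume "pdiv_ge p (pval p x + 1) (x + y)"
    from pdiv_ge_diff[OF p this y] x show False unfolding pdiv_ge_def by simp
  qed
  ultimately show ?thesis unfolding pdiv_ge_def by auto
qed

lemma pdiv_ge_of_int_imp_dvd:
  assumes p: "prime p" and z: "pdiv_ge p (int k) (of_int z)"
  shows "int p ^ k dvd z"
proof -
  obtain u w where w: "\<not> int p dvd w" and zw: "(of_int z :: rat) = of_int u * of_nat p powi k / of_int w"
    using z pdiv_ge_iff_fraction[OF p] by blast
  have "w \<noteq> 0" using w by auto
  then have "(of_int (z * w) :: rat) = of_int (u * int p ^ k)" using zw by (simp add: field_simps)
  then have "int p ^ k dvd z * w" by (simp only: of_int_eq_iff) simp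
  moreover have "coprime (int p ^ k) w" using p w by (simp add: prime_imp_coprime)
  ultimately show ?thesis using coprime_dvd_mult_left_iff by blast
qed

lemma Ints_if_pdiv_ge_divide_power:
  assumes p: "prime p" and y: "pdiv_ge p 0 y" and yz: "y = of_int z / of_nat p ^ j"
  shows "y \<in> \<int>"
proof -
  have pp: "(of_nat p :: rat) \<noteq> 0" using p by (simp add: prime_gt_0_nat)
  then have "of_int z = of_nat p powi int j * y" using yz by simp
  then have "pdiv_ge p (int j) (of_int z)"
    using y pdiv_ge_power_int_mult_iff[OF p, of "int j" "int j" y] by simp
  then obtain w where "z = int p ^ j * w" using pdiv_ge_of_int_imp_dvd[OF p] by blast
  then show ?thesis using yz pp by simp
qed


section \<open>Digit expansions\<close>

lemma digit_set_complete:
  assumes p: "prime p"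
  obtains e where "e \<in> digit_set p" "int p dvd z - e"
proof (cases "p = 2")
  case True
  have "0 \<le> z mod 2" "z mod 2 < 2" by simp_all
  then have "z mod 2 \<in> digit_set p" using True unfolding digit_set_def by auto
  moreover have "int p dvd z - z mod 2"
    using True minus_mod_eq_mult_div[of z 2] by (metis dvd_triv_left of_nat_numeral)
  ultimately show ?thesis using that by blast
next
  case False
  define h where "h = (int p - 1) div 2"
  have "p > 2" using prime_ge_2_nat[OF p] False by linarith
  then obtain m where "p = 2 * m + 1" using prime_odd_nat[OF p] oddE by blast
  then have ph: "int p = 2 * h + 1" unfolding h_def by simp
  have "0 \<le> (z + h) mod int p" "(z + h) mod int p < int p" using \<open>p > 2\<close> by simp_all
  then have "(z + h) mod int p - h \<in> digit_set p"
    using False ph unfolding digit_set_def h_def[symmetric] by simp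
  moreover have "int p dvd z - ((z + h) mod int p - h)"
    using minus_mod_eq_mult_div[of "z + h" "int p"] by (simp add: algebra_simps)
  ultimately show ?thesis using that by blast
qed

lemma digit_set_cong_imp_eq:
  assumes p: "prime p" and a: "a \<in> digit_set p" and b: "b \<in> digit_set p"
    and ab: "int p dvd a - b"
  shows "a = b"
proof -
  have "\<bar>a - b\<bar> < int p"
  proof (cases "p = 2")
    case True then show ?thesis using a b by (auto simp: digit_set_def)
  next
    case False then show ?thesis using a b prime_gt_0_nat[OF p] unfolding digit_set_def by auto
  qed
  moreover obtain k where k: "a - b = int p * k" using ab by blast
  ultimately have "int p * \<bar>k\<bar> < int p * 1" by (simp add: abs_mult)
  moreover have "0 < int p" using prime_gt_0_nat[OF p] by simp
  ultimately have "\<bar>k\<bar> < 1" using mult_less_cancel_left_pos by blast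
  then show ?thesis using k by simp
qed

lemma zero_in_digit_set: "prime p \<Longrightarrow> 0 \<in> digit_set p"
  using prime_gt_0_nat[of p] unfolding digit_set_def by auto

lemma first_digit_exists:
  assumes p: "prime p" and y: "pdiv_ge p 0 y"
  shows "\<exists>e \<in> digit_set p. pdiv_ge p 1 (y - of_int e)"
proof -
  obtain u w where w: "\<not> int p dvd w" and yw: "y = of_int u / of_int w"
    using y pdiv_ge_iff_fraction[OF p] by auto
  have "prime (int p)" using p by simp
  then have "coprime w (int p)" using w prime_imp_coprime coprime_commute by blast
  then obtain w' where "[w * w' = 1] (mod int p)" using cong_solve_coprime_int by blast
  then have w': "int p dvd w * w' - 1" by (simp add: cong_iff_dvd_diff)
  obtain e where e: "e \<in> digit_set p" "int p dvd u * w' - e"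
    using digit_set_complete[OF p] by blast
  have "u - e * w = (u * w' - e) * w - u * (w * w' - 1)" by (simp add: algebra_simps)
  then have "int p dvd u - e * w" using w' e(2) by simp
  then obtain k where k: "u - e * w = int p * k" by blast
  have "w \<noteq> 0" using w by auto
  then have "y - of_int e = of_int (u - e * w) / of_int w" using yw by (simp add: field_simps)
  then have "y - of_int e = of_int k * of_nat p powi 1 / of_int w" using k by simp
  then show ?thesis using e(1) w pdiv_ge_iff_fraction[OF p] by blast
qed

definition first_digit :: "nat \<Rightarrow> rat \<Rightarrow> int" where
  "first_digit p y = (SOME e. e \<in> digit_set p \<and> pdiv_ge p 1 (y - of_int e))"

lemma first_digit:
  assumes "prime p" and "pdiv_ge p 0 y"
  shows "first_digit p y \<in> digit_set p" and "pdiv_ge p 1 (y - of_int (first_digit p y))"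
  using someI_ex[OF first_digit_exists[OF assms, unfolded Bex_def]]
  unfolding first_digit_def by blast+

lemma first_digit_unique:
  assumes p: "prime p" and y: "pdiv_ge p 0 y"
    and e: "e \<in> digit_set p" and ye: "pdiv_ge p 1 (y - of_int e)"
  shows "e = first_digit p y"
proof -
  have "pdiv_ge p (int 1) (of_int (e - first_digit p y))"
    using pdiv_ge_diff[OF p first_digit(2)[OF p y] ye] by simp
  then have "int p dvd e - first_digit p y" using pdiv_ge_of_int_imp_dvd[OF p] by fastforce
  then show ?thesis by (rule digit_set_cong_imp_eq[OF p e first_digit(1)[OF p y]])
qed

lemma pdiv_ge_digit_shift:
  assumes p: "prime p" and y: "pdiv_ge p 0 y"
  shows "pdiv_ge p 0 ((y - of_int (first_digit p y)) / of_nat p)"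
proof -
  have "(of_nat p :: rat) \<noteq> 0" using p by (simp add: prime_gt_0_nat)
  then have "pdiv_ge p 1 (of_nat p * ((y - of_int (first_digit p y)) / of_nat p))"
    using first_digit(2)[OF p y] by simp
  then show ?thesis unfolding pdiv_ge_p_mult_iff[OF p] by simp
qed

fun digits :: "nat \<Rightarrow> rat \<Rightarrow> nat \<Rightarrow> int" where
  "digits p y 0 = first_digit p y"
| "digits p y (Suc k) = digits p ((y - of_int (first_digit p y)) / of_nat p) k"

lemma digits_in_digit_set: "prime p \<Longrightarrow> pdiv_ge p 0 y \<Longrightarrow> digits p y k \<in> digit_set p"
  by (induction k arbitrary: y) (simp_all add: first_digit(1) pdiv_ge_digit_shift)

lemma pdiv_ge_sub_digits_sum:
  assumes p: "prime p" and y: "pdiv_ge p 0 y"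
  shows "pdiv_ge p (int K) (y - (\<Sum>k<K. of_int (digits p y k) * of_nat p ^ k))"
  using y
proof (induction K arbitrary: y)
  case 0 then show ?case by simp
next
  case (Suc K)
  define y' where "y' = (y - of_int (first_digit p y)) / of_nat p"
  define rest where "rest = y' - (\<Sum>k<K. of_int (digits p y' k) * of_nat p ^ k)"
  have "pdiv_ge p (int K) rest"
    unfolding rest_def y'_def using Suc.IH pdiv_ge_digit_shift[OF p Suc.prems] by blast
  then have "pdiv_ge p (int (Suc K)) (of_nat p * rest)"
    using pdiv_ge_p_mult_iff[OF p] by simp
  moreover have sum_eq: "(\<Sum>k<Suc K. of_int (digits p y k) * (of_nat p :: rat) ^ k) =
      of_int (first_digit p y) + of_nat p * (\<Sum>k<K. of_int (digits p y' k) * of_nat p ^ k)"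
    unfolding sum.lessThan_Suc_shift y'_def by (simp add: sum_distrib_left algebra_simps)
  have "(of_nat p :: rat) \<noteq> 0" using p by (simp add: prime_gt_0_nat)
  then have "y - (\<Sum>k<Suc K. of_int (digits p y k) * of_nat p ^ k) = of_nat p * rest"
    unfolding sum_eq rest_def y'_def by (simp add: field_simps)
  ultimately show ?case by simp
qed

lemma digits_eq_if_pdiv_ge:
  assumes p: "prime p"
  shows "pdiv_ge p 0 y \<Longrightarrow> pdiv_ge p 0 y' \<Longrightarrow> pdiv_ge p (int K) (y - y') \<Longrightarrow> k < K \<Longrightarrow>
    digits p y k = digits p y' k"
proof (induction K arbitrary: y y' k)
  case 0 then show ?case by simp
next
  case (Suc K)
  have "pdiv_ge p 1 ((y - y') + (y' - of_int (first_digit p y')))"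
    using pdiv_ge_add[OF p pdiv_ge_mono[OF Suc.prems(3)] first_digit(2)[OF p Suc.prems(2)]] by simp
  then have first: "first_digit p y' = first_digit p y"
    using first_digit_unique[OF p Suc.prems(1) first_digit(1)[OF p Suc.prems(2)]] by simp
  show ?case
  proof (cases k)
    case 0 then show ?thesis using first by simp
  next
    case (Suc k')
    define z where "z = (y - of_int (first_digit p y)) / of_nat p"
    define z' where "z' = (y' - of_int (first_digit p y')) / of_nat p"
    have "(of_nat p :: rat) \<noteq> 0" using p by (simp add: prime_gt_0_nat)
    then have "y - y' = of_nat p * (z - z')"
      unfolding z_def z'_def first by (simp add: field_simps)
    then have "pdiv_ge p (int K) (z - z')"
      using Suc.prems(3) pdiv_ge_p_mult_iff[OF p] by simp
    then have "digits p z k' = digits p z' k'"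
      using Suc.IH[of z z' k'] pdiv_ge_digit_shift[OF p] Suc.prems \<open>k = Suc k'\<close>
      unfolding z_def z'_def by simp
    then show ?thesis unfolding \<open>k = Suc k'\<close> z_def z'_def by simp
  qed
qed

lemma padic_cauchy_affine:
  assumes p: "prime p" and A: "padic_cauchy p A"
  shows "padic_cauchy p (\<lambda>m. a + b * A m)"
  unfolding padic_cauchy_def
proof
  fix N
  define K where "K = (if b = 0 then 0 else pval p b)"
  obtain M where M: "\<forall>m\<ge>M. \<forall>n\<ge>M. pdiv_ge p (N - K) (A m - A n)"
    using A unfolding padic_cauchy_def by blast
  have "pdiv_ge p N ((a + b * A m) - (a + b * A n))" if "m \<ge> M" "n \<ge> M" for m n
  proof (cases "b = 0")
    case False
    then have "pdiv_ge p N (b * (A m - A n))"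
      using pdiv_ge_mult_left[OF p False] M that unfolding K_def by simp
    then show ?thesis by (simp add: algebra_simps)
  qed simp
  then show "\<exists>M. \<forall>m\<ge>M. \<forall>n\<ge>M. pdiv_ge p N ((a + b * A m) - (a + b * A n))" by blast
qed

definition has_padic_val :: "nat \<Rightarrow> (nat \<Rightarrow> rat) \<Rightarrow> int \<Rightarrow> bool" where
  "has_padic_val p A v \<longleftrightarrow> (\<forall>\<^sub>F m in sequentially. A m \<noteq> 0 \<and> pval p (A m) = v)"

lemma has_padic_val_if_not_null:
  assumes p: "prime p" and A: "padic_cauchy p A" and nonnull: "\<not> padic_close p A 0 N"
  shows "\<exists>v. has_padic_val p A v"
proof -
  obtain M where M: "\<forall>m\<ge>M. \<forall>n\<ge>M. pdiv_ge p N (A m - A n)"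
    using A unfolding padic_cauchy_def by blast
  have "\<not> (\<forall>m\<ge>M. pdiv_ge p N (A m - 0))"
    using nonnull unfolding padic_close_def eventually_sequentially by blast
  then obtain m0 where m0: "m0 \<ge> M" "\<not> pdiv_ge p N (A m0)" by auto
  then have "A m0 \<noteq> 0" and "pval p (A m0) < N" unfolding pdiv_ge_def by auto
  have "A m \<noteq> 0 \<and> pval p (A m) = pval p (A m0)" if "m \<ge> M" for m
  proof -
    have "pdiv_ge p (pval p (A m0) + 1) (A m - A m0)"
      using pdiv_ge_mono[OF M[rule_format, OF that m0(1)]] \<open>pval p (A m0) < N\<close> by simp
    from pval_add_eq[OF p \<open>A m0 \<noteq> 0\<close> this] show ?thesis by simp
  qed
  then show ?thesis unfolding has_padic_val_def eventually_sequentially by blast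
qed

lemma has_padic_val_le_if_close:
  assumes v: "has_padic_val p A v" and close: "padic_close p A 0 N"
  shows "N \<le> v"
proof -
  obtain m where "A m \<noteq> 0" "pval p (A m) = v" "pdiv_ge p N (A m)"
    using eventually_happens'[OF sequentially_bot eventually_conj[OF v[unfolded has_padic_val_def]
          close[unfolded padic_close_def]]] by auto
  then show ?thesis unfolding pdiv_ge_def by simp
qed

lemma digits_eventually_const:
  assumes p: "prime p" and y: "padic_cauchy p y" and y_int: "\<forall>\<^sub>F m in sequentially. pdiv_ge p 0 (y m)"
  shows "\<exists>d. \<forall>\<^sub>F m in sequentially. digits p (y m) k = d"
proof -
  obtain M where M: "\<forall>m\<ge>M. \<forall>n\<ge>M. pdiv_ge p (int (Suc k)) (y m - y n)"
    using y unfolding padic_cauchy_def by blast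
  obtain M' where M': "\<forall>m\<ge>M'. pdiv_ge p 0 (y m)"
    using y_int unfolding eventually_sequentially by blast
  define M0 where "M0 = max M M'"
  have "digits p (y m) k = digits p (y M0) k" if "m \<ge> M0" for m
    using digits_eq_if_pdiv_ge[OF p, of "y m" "y M0" "Suc k" k] M M' that unfolding M0_def by simp
  then show ?thesis unfolding eventually_sequentially by blast
qed

lemma sum_int_interval_reindex: "(\<Sum>n\<in>{v..<N}. f n) = (\<Sum>k<nat (N - v). f (v + int k))"
  by (rule sum.reindex_bij_witness[of _ "\<lambda>k. v + int k" "\<lambda>n. nat (n - v)"]) auto

lemma sum_powi_factor:
  assumes p: "prime p" and S: "\<forall>n\<in>S. j \<le> n"
  shows "(\<Sum>n\<in>S. of_int (e n) * (of_nat p :: rat) powi n) =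
    of_nat p powi j * of_int (\<Sum>n\<in>S. e n * int p ^ nat (n - j))"
proof -
  have pp: "(of_nat p :: rat) \<noteq> 0" using p by (simp add: prime_gt_0_nat)
  have "(\<Sum>n\<in>S. of_int (e n) * (of_nat p :: rat) powi n) =
      (\<Sum>n\<in>S. of_nat p powi j * (of_int (e n) * of_nat p ^ nat (n - j)))"
  proof (rule sum.cong)
    fix n assume "n \<in> S"
    then show "of_int (e n) * (of_nat p :: rat) powi n = of_nat p powi j * (of_int (e n) * of_nat p ^ nat (n - j))"
      using power_int_split[OF pp, of j n] S by simp
  qed simp
  also have "\<dots> = of_nat p powi j * of_int (\<Sum>n\<in>S. e n * int p ^ nat (n - j))"
    by (simp add: sum_distrib_left)
  finally show ?thesis .
qed

lemma has_padic_val_unit: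
  assumes p: "prime p" and v: "has_padic_val p A v"
  shows "\<forall>\<^sub>F m in sequentially. pdiv_ge p 0 (of_nat p powi (- v) * A m) \<and>
    \<not> pdiv_ge p 1 (of_nat p powi (- v) * A m)"
  using v unfolding has_padic_val_def
proof (rule eventually_mono)
  fix m assume Am: "A m \<noteq> 0 \<and> pval p (A m) = v"
  have "(of_nat p :: rat) \<noteq> 0" using p by (simp add: prime_gt_0_nat)
  then have "of_nat p powi (- v) * A m \<noteq> 0 \<and> pval p (of_nat p powi (- v) * A m) = 0"
    using pval_mult[OF p, of "of_nat p powi (- v)" "A m"] pval_power_int[OF p] Am by simp
  then show "pdiv_ge p 0 (of_nat p powi (- v) * A m) \<and> \<not> pdiv_ge p 1 (of_nat p powi (- v) * A m)"
    unfolding pdiv_ge_def by simp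
qed

lemma padic_close_digits_sum:
  assumes p: "prime p"
    and y: "\<forall>\<^sub>F m in sequentially. pdiv_ge p 0 (y m) \<and> (\<forall>k<K. digits p (y m) k = d k)"
  shows "padic_close p y (\<Sum>k<K. of_int (d k) * of_nat p ^ k) (int K)"
  using y unfolding padic_close_def
proof (rule eventually_mono)
  fix m assume m: "pdiv_ge p 0 (y m) \<and> (\<forall>k<K. digits p (y m) k = d k)"
  then have sum_eq: "(\<Sum>k<K. of_int (d k) * (of_nat p :: rat) ^ k) =
      (\<Sum>k<K. of_int (digits p (y m) k) * of_nat p ^ k)"
    by simp
  have "pdiv_ge p (int K) (y m - (\<Sum>k<K. of_int (digits p (y m) k) * of_nat p ^ k))"
    using pdiv_ge_sub_digits_sum[OF p] m by blast
  then show "pdiv_ge p (int K) (y m - (\<Sum>k<K. of_int (d k) * of_nat p ^ k))"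
    unfolding sum_eq .
qed

lemma padic_close_mult_power_int:
  assumes p: "prime p" and y: "padic_close p y s N"
  shows "padic_close p (\<lambda>m. of_nat p powi k * y m) (of_nat p powi k * s) (N + k)"
  using y unfolding padic_close_def
proof (rule eventually_mono)
  fix m assume "pdiv_ge p N (y m - s)"
  then have "pdiv_ge p (N + k) (of_nat p powi k * (y m - s))"
    using pdiv_ge_power_int_mult_iff[OF p] by simp
  then show "pdiv_ge p (N + k) (of_nat p powi k * y m - of_nat p powi k * s)"
    by (simp add: algebra_simps)
qed

lemma is_digit_exp_exists:
  assumes p: "prime p" and A: "padic_cauchy p A" and v: "has_padic_val p A v"
  shows "\<exists>a. is_digit_exp p A a v"
proof -
  have pp: "(of_nat p :: rat) \<noteq> 0" using p by (simp add: prime_gt_0_nat)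
  define y where "y m = of_nat p powi (- v) * A m" for m
  have A_eq: "A = (\<lambda>m. of_nat p powi v * y m)"
  proof
    fix m show "A m = of_nat p powi v * y m" unfolding y_def using pp by (simp add: power_int_minus)
  qed
  have y: "padic_cauchy p y"
    unfolding y_def using padic_cauchy_affine[OF p A, of 0] by simp
  have unit: "\<forall>\<^sub>F m in sequentially. pdiv_ge p 0 (y m) \<and> \<not> pdiv_ge p 1 (y m)"
    unfolding y_def by (rule has_padic_val_unit[OF p v])
  define d where "d k = (SOME d. \<forall>\<^sub>F m in sequentially. digits p (y m) k = d)" for k
  have d: "\<forall>\<^sub>F m in sequentially. digits p (y m) k = d k" for k
    unfolding d_def
    by (rule someI_ex, rule digits_eventually_const[OF p y]) (use unit in \<open>auto elim: eventually_mono\<close>)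
  have d_unit: "\<exists>m. digits p (y m) k = d k \<and> pdiv_ge p 0 (y m) \<and> \<not> pdiv_ge p 1 (y m)" for k
    using eventually_happens'[OF sequentially_bot eventually_conj[OF d unit]] by blast
  define a where "a n = (if n < v then 0 else d (nat (n - v)))" for n
  have "is_digit_exp p A a v"
    unfolding is_digit_exp_def
  proof (intro conjI allI impI)
    fix n
    obtain m where "digits p (y m) (nat (n - v)) = d (nat (n - v))" "pdiv_ge p 0 (y m)"
      using d_unit by blast
    then have "d (nat (n - v)) \<in> digit_set p" using digits_in_digit_set[OF p] by metis
    then show "a n \<in> digit_set p" unfolding a_def using zero_in_digit_set[OF p] by simp
  next
    fix n assume "n < v" then show "a n = 0" unfolding a_def by simp
  next
    obtain m where m: "first_digit p (y m) = d 0" "pdiv_ge p 0 (y m)" "\<not> pdiv_ge p 1 (y m)"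
      using d_unit[of 0] by auto
    then show "a v \<noteq> 0" using first_digit(2)[OF p m(2)] unfolding a_def by auto
  next
    fix N assume N: "v \<le> N"
    define K where "K = nat (N - v)"
    have "\<forall>\<^sub>F m in sequentially. \<forall>k\<in>{..<K}. digits p (y m) k = d k"
      by (rule eventually_ball_finite) (auto intro: d)
    then have "\<forall>\<^sub>F m in sequentially. pdiv_ge p 0 (y m) \<and> (\<forall>k<K. digits p (y m) k = d k)"
      using unit by eventually_elim auto
    from padic_close_mult_power_int[OF p padic_close_digits_sum[OF p this], of v]
    have "padic_close p A (of_nat p powi v * (\<Sum>k<K. of_int (d k) * of_nat p ^ k)) N"
      unfolding A_eq K_def using N by simp
    moreover have "(\<Sum>n\<in>{v..<N}. of_int (a n) * (of_nat p :: rat) powi n) =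
        of_nat p powi v * (\<Sum>k<K. of_int (d k) * of_nat p ^ k)"
      unfolding sum_int_interval_reindex K_def a_def using pp
      by (simp add: sum_distrib_left power_int_add algebra_simps)
    ultimately show "padic_close p A (\<Sum>n\<in>{v..<N}. of_int (a n) * of_nat p powi n) N" by simp
  qed
  then show ?thesis by blast
qed

lemma padic_close_diff:
  assumes p: "prime p" and s: "padic_close p A s N" and s': "padic_close p A s' N"
  shows "pdiv_ge p N (s - s')"
proof -
  obtain m where "pdiv_ge p N (A m - s)" "pdiv_ge p N (A m - s')"
    using eventually_happens'[OF sequentially_bot eventually_conj[OF s[unfolded padic_close_def]
          s'[unfolded padic_close_def]]] by blast
  from pdiv_ge_diff[OF p this(2) this(1)] show ?thesis by simp
qed

lemma is_digit_exp_close_from: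
  assumes a: "is_digit_exp p A a r" and L: "L \<le> r" and N: "r \<le> N"
  shows "padic_close p A (\<Sum>n\<in>{L..<N}. of_int (a n) * of_nat p powi n) N"
proof -
  have "(\<Sum>n\<in>{L..<N}. of_int (a n) * (of_nat p :: rat) powi n) = (\<Sum>n\<in>{r..<N}. of_int (a n) * of_nat p powi n)"
    by (rule sum.mono_neutral_right) (use a L in \<open>auto simp: is_digit_exp_def\<close>)
  then show ?thesis using a N unfolding is_digit_exp_def by simp
qed

lemma digit_eq_if_sums_close:
  assumes p: "prime p" and a: "\<forall>n. a n \<in> digit_set p" and a': "\<forall>n. a' n \<in> digit_set p"
    and k: "L \<le> k" "k < N" and below: "\<forall>j\<in>{L..<k}. a j = a' j"
    and close: "pdiv_ge p N ((\<Sum>n\<in>{L..<N}. of_int (a n) * of_nat p powi n) -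
                             (\<Sum>n\<in>{L..<N}. of_int (a' n) * of_nat p powi n))"
  shows "a k = a' k"
proof -
  define e where "e j = a j - a' j" for j
  define S where "S = (\<Sum>n\<in>{k..<N}. e n * int p ^ nat (n - k))"
  have "(\<Sum>n\<in>{L..<N}. of_int (a n) * (of_nat p :: rat) powi n) - (\<Sum>n\<in>{L..<N}. of_int (a' n) * of_nat p powi n)
      = (\<Sum>n\<in>{L..<N}. of_int (e n) * of_nat p powi n)"
    unfolding e_def by (simp add: sum_subtractf[symmetric] algebra_simps)
  also have "\<dots> = (\<Sum>n\<in>{k..<N}. of_int (e n) * of_nat p powi n)"
    by (rule sum.mono_neutral_right) (use k below in \<open>auto simp: e_def\<close>)
  also have "\<dots> = of_nat p powi k * of_int S"
    unfolding S_def by (rule sum_powi_factor[OF p]) auto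
  finally have "pdiv_ge p (N - k) (of_int S)"
    using close pdiv_ge_power_int_mult_iff[OF p] by simp
  then have "pdiv_ge p (int 1) (of_int S)" using pdiv_ge_mono k(2) by fastforce
  then have "int p dvd S" using pdiv_ge_of_int_imp_dvd[OF p] by fastforce
  moreover have "S = e k + (\<Sum>n\<in>{k..<N} - {k}. e n * int p ^ nat (n - k))"
    unfolding S_def using k(2) by (subst sum.remove[of _ k]) auto
  moreover have "int p dvd (\<Sum>n\<in>{k..<N} - {k}. e n * int p ^ nat (n - k))"
  proof (rule dvd_sum)
    fix n assume "n \<in> {k..<N} - {k}"
    then have "nat (n - k) = Suc (nat (n - k - 1))" by auto
    then show "int p dvd e n * int p ^ nat (n - k)" by simp
  qed
  ultimately have "int p dvd a k - a' k" unfolding e_def by (simp add: dvd_add_left_iff)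
  then show ?thesis using digit_set_cong_imp_eq[OF p] a a' by blast
qed

lemma is_digit_exp_unique:
  assumes p: "prime p" and a: "is_digit_exp p A a r" and a': "is_digit_exp p A a' r'"
  shows "a = a' \<and> r = r'"
proof -
  define L where "L = min r r'"
  have digits: "\<forall>n. a n \<in> digit_set p" "\<forall>n. a' n \<in> digit_set p"
    using a a' unfolding is_digit_exp_def by auto
  have step: "a (L + int k) = a' (L + int k)" for k
  proof (induction k rule: less_induct)
    case (less k)
    define N where "N = max (max r r') (L + int k + 1)"
    have "\<forall>j\<in>{L..<L + int k}. a j = a' j"
    proof
      fix j assume "j \<in> {L..<L + int k}"
      then have "j = L + int (nat (j - L))" "nat (j - L) < k" by auto
      then show "a j = a' j" using less.IH by metis
    qed
    moreover have "pdiv_ge p N ((\<Sum>n\<in>{L..<N}. of_int (a n) * of_nat p powi n) -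
                             (\<Sum>n\<in>{L..<N}. of_int (a' n) * of_nat p powi n))"
      by (rule padic_close_diff[OF p is_digit_exp_close_from[OF a] is_digit_exp_close_from[OF a']])
        (auto simp: L_def N_def)
    ultimately show ?case
      by (intro digit_eq_if_sums_close[OF p digits, of L _ N]) (auto simp: N_def)
  qed
  have "a n = a' n" for n
  proof (cases "n < L")
    case True then show ?thesis using a a' unfolding is_digit_exp_def L_def by auto
  next
    case False
    then have "n = L + int (nat (n - L))" by simp
    then show ?thesis using step by metis
  qed
  then have "a = a'" by blast
  moreover have "r = r'"
  proof (rule ccontr)
    assume "r \<noteq> r'"
    then have "r < r' \<or> r' < r" by auto
    then show False using a a' \<open>a = a'\<close> unfolding is_digit_exp_def by auto
  qed
  ultimately show ?thesis by simp
qed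

lemma padic_val_digits:
  assumes p: "prime p" and A: "padic_cauchy p A" and v: "has_padic_val p A v"
  shows "padic_val p A = v" and "is_digit_exp p A (padic_digits p A) v"
proof -
  obtain a where a: "is_digit_exp p A a v" using is_digit_exp_exists[OF p A v] by blast
  have "padic_val p A = v"
    unfolding padic_val_def using a is_digit_exp_unique[OF p _ a] by blast
  moreover have "padic_digits p A = a"
    unfolding padic_digits_def using a is_digit_exp_unique[OF p _ a] by blast
  ultimately show "padic_val p A = v" "is_digit_exp p A (padic_digits p A) v" using a by simp_all
qed

section \<open>The truncations s and t and their lifts\<close>

lemma padic_digit_sum_close:
  assumes p: "prime p" and A: "padic_cauchy p A" and v: "has_padic_val p A v"
  shows "padic_close p A (\<Sum>n\<in>{padic_val p A..<K}. of_int (padic_digits p A n) * of_nat p powi n) K"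
proof (cases "v \<le> K")
  case True
  then show ?thesis using padic_val_digits[OF p A v] unfolding is_digit_exp_def by simp
next
  case False
  then have "{padic_val p A..<K} = {}" using padic_val_digits(1)[OF p A v] by simp
  moreover have "\<forall>\<^sub>F m in sequentially. pdiv_ge p K (A m)"
    using v unfolding has_padic_val_def
    by (rule eventually_mono) (use False in \<open>auto simp: pdiv_ge_def\<close>)
  ultimately show ?thesis unfolding padic_close_def by simp
qed

lemma sum_digits_powi_eq_fraction:
  assumes p: "prime p"
  shows "\<exists>z. (\<Sum>n\<in>{v..<K}. of_int (e n) * (of_nat p :: rat) powi n) = of_int z / of_nat p ^ nat (- v)"
proof -
  define S where "S = (\<Sum>n\<in>{v..<K}. e n * int p ^ nat (n - v))"
  have "(\<Sum>n\<in>{v..<K}. of_int (e n) * (of_nat p :: rat) powi n) = of_nat p powi v * of_int S"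
    unfolding S_def by (rule sum_powi_factor[OF p]) auto
  also have "\<dots> = of_int (S * int p ^ nat v) / of_nat p ^ nat (- v)"
    by (cases "v \<ge> 0") (simp_all add: power_int_def divide_inverse power_inverse)
  finally show ?thesis by blast
qed

lemma padic_s_props:
  assumes p: "prime p" and A: "padic_cauchy p A" and v: "has_padic_val p A v"
  shows "padic_close p A (padic_s p A) 1" and "\<exists>z. padic_s p A = of_int z / of_nat p ^ nat (- v)"
proof -
  have "{padic_val p A..0} = {padic_val p A..<1}" by auto
  then have s_eq: "padic_s p A = (\<Sum>n\<in>{padic_val p A..<1}. of_int (padic_digits p A n) * of_nat p powi n)"
    unfolding padic_s_def by simp
  show "padic_close p A (padic_s p A) 1"
    unfolding s_eq by (rule padic_digit_sum_close[OF p A v])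
  show "\<exists>z. padic_s p A = of_int z / of_nat p ^ nat (- v)"
    unfolding s_eq padic_val_digits(1)[OF p A v] by (rule sum_digits_powi_eq_fraction[OF p])
qed

lemma padic_t_props:
  assumes p: "prime p" and A: "padic_cauchy p A" and v: "has_padic_val p A v"
  shows "padic_close p A (padic_t p A) 0" and "\<exists>z. padic_t p A = of_int z / of_nat p ^ nat (- v)"
proof -
  have "{padic_val p A..-1} = {padic_val p A..<0}" by auto
  then have t_eq: "padic_t p A = (\<Sum>n\<in>{padic_val p A..<0}. of_int (padic_digits p A n) * of_nat p powi n)"
    unfolding padic_t_def by simp
  show "padic_close p A (padic_t p A) 0"
    unfolding t_eq by (rule padic_digit_sum_close[OF p A v])
  show "\<exists>z. padic_t p A = of_int z / of_nat p ^ nat (- v)"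
    unfolding t_eq padic_val_digits(1)[OF p A v] by (rule sum_digits_powi_eq_fraction[OF p])
qed

lemma abs_round_lift_sub_le:
  fixes a s m :: "'a :: floor_ceiling"
  assumes m: "m > 0"
  shows "\<bar>of_int (round ((a - s) / m)) * m + s - a\<bar> \<le> m / 2"
proof -
  have "\<bar>of_int (round ((a - s) / m)) - (a - s) / m\<bar> * m \<le> 1 / 2 * m"
    using of_int_round_abs_le m by (intro mult_right_mono) auto
  moreover have "(of_int (round ((a - s) / m)) - (a - s) / m) * m = of_int (round ((a - s) / m)) * m + s - a"
    using m by (simp add: field_simps)
  then have "\<bar>of_int (round ((a - s) / m)) - (a - s) / m\<bar> * m = \<bar>of_int (round ((a - s) / m)) * m + s - a\<bar>"
    using m by (metis abs_mult abs_of_pos)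
  ultimately show ?thesis by simp
qed

lemma padic_close_add_multiple:
  assumes p: "prime p" and s: "padic_close p A s (int e)" and sz: "s = of_int z / of_nat p ^ j"
  shows "padic_close p A (of_int k * of_nat p ^ e + s) (int e)"
    and "\<exists>z'. of_int k * of_nat p ^ e + s = of_int z' / of_nat p ^ j"
proof -
  have "pdiv_ge p (0 + int e) (of_int k * of_nat p powi int e)"
    by (rule pdiv_ge_mult[OF p pdiv_ge_of_int[OF p] pdiv_ge_power_int[OF p]])
  then have k: "pdiv_ge p (int e) (of_int k * of_nat p ^ e)" by simp
  show "padic_close p A (of_int k * of_nat p ^ e + s) (int e)"
    using s unfolding padic_close_def
  proof (rule eventually_mono)
    fix m assume "pdiv_ge p (int e) (A m - s)"
    from pdiv_ge_diff[OF p this k] show "pdiv_ge p (int e) (A m - (of_int k * of_nat p ^ e + s))"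
      by (simp add: algebra_simps)
  qed
  have "(of_nat p :: rat) \<noteq> 0" using p by (simp add: prime_gt_0_nat)
  then have "of_int k * of_nat p ^ e + s = of_int (k * int p ^ e * int p ^ j + z) / of_nat p ^ j"
    unfolding sz by (simp add: field_simps)
  then show "\<exists>z'. of_int k * of_nat p ^ e + s = of_int z' / of_nat p ^ j" by blast
qed

section \<open>The quadratic field embedded in Q_p\<close>

lemma rat_square_ne_nonsquare:
  assumes D: "\<not> (\<exists>k::int. D = k^2)"
  shows "(q::rat)^2 \<noteq> of_int D"
proof
  assume q: "q^2 = of_int D"
  obtain n d where nd: "quotient_of q = (n, d)" by (cases "quotient_of q")
  have d: "d > 0" using quotient_of_denom_pos[OF nd] .
  have q_eq: "q = of_int n / of_int d" using quotient_of_div[OF nd] .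
  have "(of_int (n^2) :: rat) = of_int (D * d^2)"
    using q d unfolding q_eq by (simp add: field_simps power2_eq_square)
  then have n2: "n^2 = D * d^2" by (simp only: of_int_eq_iff)
  moreover have "coprime (n^2) d" using quotient_of_coprime[OF nd] by simp
  ultimately have "is_unit d" using coprime_common_divisor[of "n^2" d d] by simp
  then have "d = 1" using d by simp
  then have "D = n^2" using n2 by simp
  with D show False by blast
qed

lemma qs_inv_eq: "qs_inv D (a, b) = (a / (a^2 - of_int D * b^2), - b / (a^2 - of_int D * b^2))"
  unfolding qs_inv_def by (simp add: Let_def)

lemma qs_approx_sub_rat: "qs_approx r (qs_sub_rat x c) m = qs_approx r x m - c"
  unfolding qs_approx_def qs_sub_rat_def by simp

locale padic_sqrt =
  fixes p :: nat and r :: "nat \<Rightarrow> rat" and D :: int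
  assumes prime: "prime p"
    and nonsquare: "\<not> (\<exists>k::int. D = k^2)"
    and cauchy: "padic_cauchy p r"
    and sqrt: "padic_tendsto p (\<lambda>m. (r m)^2) (of_int D)"
begin

abbreviation qs_val :: "qsqrt \<Rightarrow> int" where
  "qs_val x \<equiv> padic_val p (qs_approx r x)"

lemma qs_norm_nonzero:
  assumes b: "b \<noteq> 0" shows "(a::rat)^2 - of_int D * b^2 \<noteq> 0"
proof
  assume "a^2 - of_int D * b^2 = 0"
  then have "(a / b)^2 = of_int D" using b by (simp add: field_simps power2_eq_square)
  then show False using rat_square_ne_nonsquare[OF nonsquare] by blast
qed

lemma snd_qs_inv_nonzero: "snd x \<noteq> 0 \<Longrightarrow> snd (qs_inv D x) \<noteq> 0"
  using qs_norm_nonzero by (cases x) (simp add: qs_inv_eq)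

lemma qs_approx_cauchy: "padic_cauchy p (qs_approx r x)"
  unfolding qs_approx_def by (rule padic_cauchy_affine[OF prime cauchy])

lemma eventually_pdiv_ge_0_r: "\<forall>\<^sub>F m in sequentially. pdiv_ge p 0 (r m)"
  using sqrt[unfolded padic_tendsto_def, rule_format, of 0]
proof (rule eventually_mono)
  fix m assume "pdiv_ge p 0 ((r m)^2 - of_int D)"
  from pdiv_ge_add[OF prime this pdiv_ge_of_int[OF prime, of D]]
  have sq: "pdiv_ge p 0 (r m * r m)" by (simp add: power2_eq_square)
  show "pdiv_ge p 0 (r m)"
  proof (cases "r m = 0")
    case False
    then show ?thesis using sq pval_mult[OF prime False False] unfolding pdiv_ge_def by simp
  qed simp
qed

text \<open>If the image of a + b \<surd>D in Q_p were 0, then r would converge to the rational -a/b,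
  whose square would then be D.\<close>

lemma qs_approx_not_null:
  assumes b: "snd x \<noteq> 0"
  shows "\<exists>N. \<not> padic_close p (qs_approx r x) 0 N"
proof (rule ccontr)
  assume "\<not> ?thesis"
  then have null: "\<forall>\<^sub>F m in sequentially. pdiv_ge p N (fst x + snd x * r m)" for N
    unfolding padic_close_def qs_approx_def by simp
  define q where "q = - fst x / snd x"
  have r_q: "\<forall>\<^sub>F m in sequentially. pdiv_ge p N (r m - q)" for N
    using null[of "N - pval p (1 / snd x)"]
  proof (rule eventually_mono)
    fix m assume "pdiv_ge p (N - pval p (1 / snd x)) (fst x + snd x * r m)"
    then have "pdiv_ge p N (1 / snd x * (fst x + snd x * r m))"
      using pdiv_ge_mult_left[OF prime, of "1 / snd x"] b by simp
    moreover have "1 / snd x * (fst x + snd x * r m) = r m - q" unfolding q_def using b by (simp add: field_simps)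
    ultimately show "pdiv_ge p N (r m - q)" by simp
  qed
  define K where "K = (if q = 0 then 0 else pval p q)"
  have q: "pdiv_ge p K q" unfolding K_def by (cases "q = 0") (auto intro: pdiv_ge_pval)
  have "pdiv_ge p N (of_int D - q^2)" for N
  proof -
    define N' where "N' = \<bar>N\<bar> + \<bar>K\<bar>"
    obtain m where m: "pdiv_ge p N ((r m)^2 - of_int D)" "pdiv_ge p N' (r m - q)"
      using eventually_happens'[OF sequentially_bot eventually_conj[OF
          sqrt[unfolded padic_tendsto_def, rule_format, of N] r_q[of N']]] by blast
    have sq: "pdiv_ge p (N' + N') ((r m - q) * (r m - q))" using pdiv_ge_mult[OF prime m(2) m(2)] .
    have lin: "pdiv_ge p (0 + K + N') (2 * q * (r m - q))"
      using pdiv_ge_mult[OF prime pdiv_ge_mult[OF prime pdiv_ge_of_int[OF prime, of 2] q] m(2)] by simp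
    have "pdiv_ge p N ((r m - q) * (r m - q) + 2 * q * (r m - q))"
      by (rule pdiv_ge_add[OF prime pdiv_ge_mono[OF sq] pdiv_ge_mono[OF lin]]) (auto simp: N'_def)
    then have "pdiv_ge p N ((r m)^2 - q^2)" by (simp add: algebra_simps power2_eq_square)
    from pdiv_ge_diff[OF prime this m(1)] show ?thesis by simp
  qed
  then have "of_int D - q^2 = 0" by (rule pdiv_ge_all_imp_zero)
  then show False using rat_square_ne_nonsquare[OF nonsquare, of q] by simp
qed

lemma has_padic_val_qs:
  assumes "snd x \<noteq> 0" shows "has_padic_val p (qs_approx r x) (qs_val x)"
proof -
  obtain v where v: "has_padic_val p (qs_approx r x) v"
    using qs_approx_not_null[OF assms] has_padic_val_if_not_null[OF prime qs_approx_cauchy] by blast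
  then show ?thesis using padic_val_digits(1)[OF prime qs_approx_cauchy v] by simp
qed

lemma qs_val_ge_if_close:
  "snd x \<noteq> 0 \<Longrightarrow> padic_close p (qs_approx r x) 0 N \<Longrightarrow> N \<le> qs_val x"
  using has_padic_val_le_if_close[OF has_padic_val_qs] .


lemma qs_val_inv:
  assumes y: "snd y \<noteq> 0"
  shows "qs_val (qs_inv D y) = - qs_val y"
proof -
  obtain a c where y_eq: "y = (a, c)" by (cases y)
  have c: "c \<noteq> 0" using y y_eq by simp
  define N where "N = a^2 - of_int D * c^2"
  have N: "N \<noteq> 0" unfolding N_def using qs_norm_nonzero[OF c] .
  define K where "K = c^2 / N"
  have K: "K \<noteq> 0" unfolding K_def using N c by simp
  have prod: "qs_approx r (qs_inv D y) m * qs_approx r y m = 1 + K * (of_int D - (r m)^2)" for m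
  proof -
    have "qs_approx r (qs_inv D y) m * qs_approx r y m = (a^2 - c^2 * (r m)^2) / N"
      unfolding y_eq qs_inv_eq N_def[symmetric] qs_approx_def using N
      by (simp add: field_simps power2_eq_square)
    also have "\<dots> = (N + of_int D * c^2 - c^2 * (r m)^2) / N" unfolding N_def by simp
    also have "\<dots> = 1 + K * (of_int D - (r m)^2)" unfolding K_def using N by (simp add: field_simps)
    finally show ?thesis .
  qed
  have "\<forall>\<^sub>F m in sequentially. pdiv_ge p 1 (K * (of_int D - (r m)^2))"
    using sqrt[unfolded padic_tendsto_def, rule_format, of "1 - pval p K"]
  proof (rule eventually_mono)
    fix m assume "pdiv_ge p (1 - pval p K) ((r m)^2 - of_int D)"
    from pdiv_ge_uminus[OF prime this] have "pdiv_ge p (1 - pval p K) (of_int D - (r m)^2)" by simp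
    from pdiv_ge_mult_left[OF prime K this] show "pdiv_ge p 1 (K * (of_int D - (r m)^2))" .
  qed
  then obtain m where
      m_inv: "qs_approx r (qs_inv D y) m \<noteq> 0" "pval p (qs_approx r (qs_inv D y) m) = qs_val (qs_inv D y)"
    and m_y: "qs_approx r y m \<noteq> 0" "pval p (qs_approx r y m) = qs_val y"
    and small: "pdiv_ge p (pval p 1 + 1) (K * (of_int D - (r m)^2))"
    using eventually_happens'[OF sequentially_bot eventually_conj[OF
        has_padic_val_qs[OF snd_qs_inv_nonzero[OF y], unfolded has_padic_val_def]
        eventually_conj[OF has_padic_val_qs[OF y, unfolded has_padic_val_def]]]]
      pval_one[OF prime] by auto
  have "pval p (1 + K * (of_int D - (r m)^2)) = 0"
    using pval_add_eq[OF prime _ small] pval_one[OF prime] by simp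
  moreover have "pval p (qs_approx r (qs_inv D y) m * qs_approx r y m) = qs_val (qs_inv D y) + qs_val y"
    using pval_mult[OF prime m_inv(1) m_y(1)] m_inv(2) m_y(2) by simp
  ultimately show ?thesis unfolding prod by simp
qed

lemma s_bar_props:
  assumes x: "snd x \<noteq> 0"
  shows "padic_close p (qs_approx r x) (s_bar p r x) 1"
    and "\<exists>z. s_bar p r x = of_int z / of_nat p ^ nat (- qs_val x)"
    and "\<bar>s_bar p r x - fst x\<bar> \<le> of_nat p / 2"
proof -
  define s where "s = padic_s p (qs_approx r x)"
  define k where "k = round ((fst x - s) / of_nat p)"
  have sb: "s_bar p r x = of_int k * of_nat p ^ 1 + s"
    unfolding s_bar_def qs_trace_avg_def Let_def k_def s_def by simp
  note s_props = padic_s_props[OF prime qs_approx_cauchy has_padic_val_qs[OF x], folded s_def]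
  obtain z where z: "s = of_int z / of_nat p ^ nat (- qs_val x)" using s_props(2) by blast
  show "padic_close p (qs_approx r x) (s_bar p r x) 1"
    using padic_close_add_multiple(1)[OF prime _ z, where e = 1 and k = k] s_props(1)
    unfolding sb by simp
  show "\<exists>z. s_bar p r x = of_int z / of_nat p ^ nat (- qs_val x)"
    using padic_close_add_multiple(2)[OF prime _ z, where e = 1 and k = k] s_props(1)
    unfolding sb by simp
  show "\<bar>s_bar p r x - fst x\<bar> \<le> of_nat p / 2"
    using abs_round_lift_sub_le[of "of_nat p" "fst x" s] prime_gt_0_nat[OF prime]
    unfolding sb k_def by simp
qed

lemma t_bar_props:
  assumes x: "snd x \<noteq> 0"
  shows "padic_close p (qs_approx r x) (t_bar p r x) 0"
    and "\<exists>z. t_bar p r x = of_int z / of_nat p ^ nat (- qs_val x)"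
    and "\<bar>t_bar p r x - fst x\<bar> \<le> 1 / 2"
proof -
  define t where "t = padic_t p (qs_approx r x)"
  define k where "k = round (fst x - t)"
  have tb: "t_bar p r x = of_int k * of_nat p ^ 0 + t"
    unfolding t_bar_def qs_trace_avg_def Let_def k_def t_def by simp
  note t_props = padic_t_props[OF prime qs_approx_cauchy has_padic_val_qs[OF x], folded t_def]
  obtain z where z: "t = of_int z / of_nat p ^ nat (- qs_val x)" using t_props(2) by blast
  show "padic_close p (qs_approx r x) (t_bar p r x) 0"
    using padic_close_add_multiple(1)[OF prime _ z, where e = 0 and k = k] t_props(1)
    unfolding tb by simp
  show "\<exists>z. t_bar p r x = of_int z / of_nat p ^ nat (- qs_val x)"
    using padic_close_add_multiple(2)[OF prime _ z, where e = 0 and k = k] t_props(1)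
    unfolding tb by simp
  show "\<bar>t_bar p r x - fst x\<bar> \<le> 1 / 2"
    using abs_round_lift_sub_le[of 1 "fst x" t] unfolding tb k_def by simp
qed

end

section \<open>The continued fraction step\<close>

text \<open>A state \<open>x = (a, b)\<close> stands for \<open>a + b \<surd>D = (P + \<surd>(D Q\<^sup>2)) / Q'\<close> with \<open>P = cf_num x = a Q / b\<close>
  and \<open>Q' = cf_den x = Q / b\<close>; \<open>cf_form\<close> is the classical invariant of continued fraction
  expansions of quadratic irrationals.\<close>

locale padic_cf = padic_sqrt +
  fixes Q :: int
  assumes Q: "Q \<noteq> 0"
begin

definition cf_den :: "qsqrt \<Rightarrow> rat" where
  "cf_den x = of_int Q / snd x"

definition cf_num :: "qsqrt \<Rightarrow> rat" where
  "cf_num x = fst x * of_int Q / snd x"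

definition cf_form :: "qsqrt \<Rightarrow> bool" where
  "cf_form x \<longleftrightarrow> snd x \<noteq> 0 \<and> cf_den x \<in> \<int> \<and> cf_num x \<in> \<int> \<and>
     (of_int D * of_int Q ^ 2 - cf_num x ^ 2) / cf_den x \<in> \<int>"

definition cf_next :: "qsqrt \<Rightarrow> rat \<Rightarrow> qsqrt" where
  "cf_next x c = qs_inv D (qs_sub_rat x c)"

lemma cf_alpha_Suc: "cf_alpha D R x (Suc n) = cf_next (cf_alpha D R x n) (cf_b D R x n)"
  unfolding cf_b_def cf_next_def by (simp add: Let_def)

lemma snd_cf_next_nonzero: "snd x \<noteq> 0 \<Longrightarrow> snd (cf_next x c) \<noteq> 0"
  unfolding cf_next_def using snd_qs_inv_nonzero[of "qs_sub_rat x c"] by (simp add: qs_sub_rat_def)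

lemma cf_den_nonzero: "snd x \<noteq> 0 \<Longrightarrow> cf_den x \<noteq> 0"
  unfolding cf_den_def using Q by simp

lemma cf_num_eq: "cf_num x = fst x * cf_den x"
  unfolding cf_num_def cf_den_def by simp

lemma cf_next_eq:
  "cf_next x c = ((fst x - c) / ((fst x - c)^2 - of_int D * (snd x)^2),
                  - snd x / ((fst x - c)^2 - of_int D * (snd x)^2))"
  unfolding cf_next_def qs_sub_rat_def by (cases x) (simp add: qs_inv_eq)

lemma cf_next_eqE:
  assumes "snd x \<noteq> 0"
  obtains N where "N \<noteq> 0" "N = (fst x - c)^2 - of_int D * (snd x)^2"
    and "cf_next x c = ((fst x - c) / N, - snd x / N)"
  using qs_norm_nonzero[OF assms] unfolding cf_next_eq by blast

lemma cf_num_next: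
  assumes b: "snd x \<noteq> 0" shows "cf_num (cf_next x c) = (c - fst x) * cf_den x"
proof -
  obtain N where N: "N \<noteq> 0" and next_eq: "cf_next x c = ((fst x - c) / N, - snd x / N)"
    using cf_next_eqE[OF b] by blast
  show ?thesis unfolding cf_num_def cf_den_def next_eq using N b by (simp add: field_simps)
qed

lemma cf_den_next:
  assumes b: "snd x \<noteq> 0"
  shows "cf_den (cf_next x c) = of_int D * of_int Q ^ 2 / cf_den x - (c - fst x)^2 * cf_den x"
proof -
  obtain N where N: "N \<noteq> 0" "N = (fst x - c)^2 - of_int D * (snd x)^2"
    and next_eq: "cf_next x c = ((fst x - c) / N, - snd x / N)"
    using cf_next_eqE[OF b] by blast
  have "(of_int Q :: rat) \<noteq> 0" using Q by simp
  then show ?thesis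
    using N(1) b unfolding cf_den_def next_eq N(2) by (simp add: field_simps power2_eq_square)
qed

lemma cf_den_mult_cf_den_next:
  assumes b: "snd x \<noteq> 0"
  shows "cf_den x * cf_den (cf_next x c) = of_int D * of_int Q ^ 2 - cf_num (cf_next x c) ^ 2"
  unfolding cf_den_next[OF b] cf_num_next[OF b] using cf_den_nonzero[OF b]
  by (simp add: field_simps power2_eq_square)

lemma cf_den_next_eq:
  assumes b: "snd x \<noteq> 0"
  shows "cf_den (cf_next x c) =
    (of_int D * of_int Q ^ 2 - cf_num x ^ 2) / cf_den x - c * (c * cf_den x - 2 * cf_num x)"
proof -
  have "cf_num x ^ 2 / cf_den x = fst x ^ 2 * cf_den x"
    unfolding cf_num_eq using cf_den_nonzero[OF b] by (simp add: power2_eq_square)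
  then show ?thesis
    unfolding cf_den_next[OF b] diff_divide_distrib by (simp add: cf_num_eq algebra_simps power2_eq_square)
qed

lemma qs_val_cf_next:
  assumes x: "snd x \<noteq> 0" and close: "padic_close p (qs_approx r x) c N"
  shows "qs_val (cf_next x c) \<le> - N"
proof -
  have sub: "snd (qs_sub_rat x c) \<noteq> 0" using x by (simp add: qs_sub_rat_def)
  have "qs_val (cf_next x c) = - qs_val (qs_sub_rat x c)"
    unfolding cf_next_def by (rule qs_val_inv[OF sub])
  moreover have "padic_close p (qs_approx r (qs_sub_rat x c)) 0 N"
    using close unfolding padic_close_def qs_approx_sub_rat by simp
  then have "N \<le> qs_val (qs_sub_rat x c)" by (rule qs_val_ge_if_close[OF sub])
  ultimately show ?thesis by simp
qed

lemma cf_den_mult_qs_approx: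
  "snd x \<noteq> 0 \<Longrightarrow> cf_den x * qs_approx r x m = cf_num x + of_int Q * r m"
  unfolding cf_num_def cf_den_def qs_approx_def by (simp add: field_simps)

lemma pdiv_ge_cf_den:
  assumes x: "snd x \<noteq> 0" and P: "cf_num x \<in> \<int>"
  shows "pdiv_ge p (- qs_val x) (cf_den x)"
proof -
  obtain m where r: "pdiv_ge p 0 (r m)" and A: "qs_approx r x m \<noteq> 0" "pval p (qs_approx r x m) = qs_val x"
    using eventually_happens'[OF sequentially_bot eventually_conj[OF eventually_pdiv_ge_0_r
        has_padic_val_qs[OF x, unfolded has_padic_val_def]]] by blast
  obtain z where z: "cf_num x = of_int z" using P Ints_cases by blast
  have "pdiv_ge p (0 + 0) (of_int Q * r m)" by (rule pdiv_ge_mult[OF prime pdiv_ge_of_int[OF prime] r])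
  then have "pdiv_ge p 0 (of_int z + of_int Q * r m)"
    using pdiv_ge_add[OF prime pdiv_ge_of_int[OF prime]] by simp
  then have "pdiv_ge p 0 (cf_den x * qs_approx r x m)"
    unfolding cf_den_mult_qs_approx[OF x] z .
  from pdiv_ge_mult_cancel_right[OF prime A(1) this] show ?thesis using A(2) by simp
qed

lemma mult_cf_den_Ints:
  assumes x: "cf_form x" and c: "c = of_int z / of_nat p ^ nat (- qs_val x)"
  shows "c * cf_den x \<in> \<int>"
proof -
  obtain k where k: "cf_den x = of_int k" using x Ints_cases unfolding cf_form_def by metis
  show ?thesis
  proof (cases "qs_val x \<ge> 0")
    case True then show ?thesis using c k by simp
  next
    case False
    have pp: "(of_nat p :: rat) \<noteq> 0" using prime by (simp add: prime_gt_0_nat)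
    have "pdiv_ge p (- qs_val x) (cf_den x)" using pdiv_ge_cf_den x unfolding cf_form_def by blast
    then have "pdiv_ge p 0 (of_nat p powi qs_val x * cf_den x)"
      using pdiv_ge_power_int_mult_iff[OF prime] by simp
    from pdiv_ge_mult[OF prime pdiv_ge_of_int[OF prime, of z] this]
    have "pdiv_ge p 0 (of_int z * (of_nat p powi qs_val x * cf_den x))" by simp
    moreover have "c = of_nat p powi qs_val x * of_int z"
      unfolding c using divide_power_nat_eq_power_int[OF pp, of "qs_val x"] False by simp
    then have "of_int z * (of_nat p powi qs_val x * cf_den x) = c * cf_den x" by simp
    ultimately have "pdiv_ge p 0 (c * cf_den x)" by simp
    moreover have "c * cf_den x = of_int (z * k) / of_nat p ^ nat (- qs_val x)" using c k by simp
    ultimately show ?thesis using Ints_if_pdiv_ge_divide_power[OF prime] by blast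
  qed
qed

lemma cf_form_next:
  assumes x: "cf_form x" and close: "padic_close p (qs_approx r x) c (int e)"
    and c: "c = of_int z / of_nat p ^ nat (- qs_val x)"
  shows "cf_form (cf_next x c)" and "qs_val (cf_next x c) \<le> - int e"
proof -
  have b: "snd x \<noteq> 0" using x unfolding cf_form_def by simp
  show v': "qs_val (cf_next x c) \<le> - int e" using qs_val_cf_next[OF b close] .
  obtain P where P: "cf_num x = of_int P" using x Ints_cases unfolding cf_form_def by metis
  obtain W where W: "(of_int D * of_int Q ^ 2 - cf_num x ^ 2) / cf_den x = of_int W"
    using x Ints_cases unfolding cf_form_def by metis
  obtain C where C: "c * cf_den x = of_int C" using mult_cf_den_Ints[OF x c] Ints_cases by metis
  have b': "snd (cf_next x c) \<noteq> 0" using snd_cf_next_nonzero[OF b] .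
  have P': "cf_num (cf_next x c) \<in> \<int>"
    unfolding cf_num_next[OF b] using C P cf_num_eq[of x] by (simp add: algebra_simps)
  have Q': "cf_den (cf_next x c) \<in> \<int>"
  proof (rule Ints_if_pdiv_ge_divide_power[OF prime])
    show "pdiv_ge p 0 (cf_den (cf_next x c))"
      using pdiv_ge_mono[OF pdiv_ge_cf_den[OF b' P']] v' by simp
    have "cf_den (cf_next x c) = of_int W - c * (c * cf_den x - 2 * cf_num x)"
      using cf_den_next_eq[OF b, of c] unfolding W .
    also have "\<dots> = of_int W - c * (of_int C - 2 * of_int P)" unfolding C P ..
    also have "(of_nat p :: rat) \<noteq> 0" using prime by (simp add: prime_gt_0_nat)
    then have "of_int W - c * (of_int C - 2 * of_int P) =
        of_int (W * int p ^ nat (- qs_val x) - z * (C - 2 * P)) / of_nat p ^ nat (- qs_val x)"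
      unfolding c by (simp add: field_simps)
    finally show "cf_den (cf_next x c) =
        of_int (W * int p ^ nat (- qs_val x) - z * (C - 2 * P)) / of_nat p ^ nat (- qs_val x)" .
  qed
  have "(of_int D * of_int Q ^ 2 - cf_num (cf_next x c) ^ 2) / cf_den (cf_next x c) = cf_den x"
    using cf_den_mult_cf_den_next[OF b] cf_den_nonzero[OF b'] by (simp add: field_simps)
  then show "cf_form (cf_next x c)"
    using b' P' Q' x unfolding cf_form_def by simp
qed


lemma cf_form_initial: "cf_form (of_int P / of_int Q, 1 / of_int Q)"
proof -
  have Q': "(of_int Q :: rat) \<noteq> 0" using Q by simp
  have "cf_den (of_int P / of_int Q, 1 / of_int Q) = of_int (Q * Q)"
    and "cf_num (of_int P / of_int Q, 1 / of_int Q) = of_int (P * Q)"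
    unfolding cf_den_def cf_num_def using Q' by simp_all
  moreover have "(of_int D * of_int Q ^ 2 - of_int (P * Q) ^ 2) / of_int (Q * Q) = (of_int (D - P * P) :: rat)"
    using Q' by (simp add: field_simps power2_eq_square)
  ultimately show ?thesis unfolding cf_form_def using Q' by simp
qed

lemma cf_form_next_s_bar:
  assumes x: "cf_form x"
  shows "cf_form (cf_next x (s_bar p r x))" and "qs_val (cf_next x (s_bar p r x)) \<le> -1"
proof -
  have b: "snd x \<noteq> 0" using x unfolding cf_form_def by simp
  obtain z where z: "s_bar p r x = of_int z / of_nat p ^ nat (- qs_val x)" using s_bar_props(2)[OF b] by blast
  have "padic_close p (qs_approx r x) (s_bar p r x) (int 1)" using s_bar_props(1)[OF b] by simp
  from cf_form_next[OF x this z]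
  show "cf_form (cf_next x (s_bar p r x))" "qs_val (cf_next x (s_bar p r x)) \<le> -1" by simp_all
qed

lemma cf_form_next_t_bar:
  assumes x: "cf_form x"
  shows "cf_form (cf_next x (t_bar p r x))" and "qs_val (cf_next x (t_bar p r x)) \<le> 0"
proof -
  have b: "snd x \<noteq> 0" using x unfolding cf_form_def by simp
  obtain z where z: "t_bar p r x = of_int z / of_nat p ^ nat (- qs_val x)" using t_bar_props(2)[OF b] by blast
  have "padic_close p (qs_approx r x) (t_bar p r x) (int 0)" using t_bar_props(1)[OF b] by simp
  from cf_form_next[OF x this z]
  show "cf_form (cf_next x (t_bar p r x))" "qs_val (cf_next x (t_bar p r x)) \<le> 0" by simp_all
qed

lemma abs_cf_den_ge_1:
  assumes "cf_form x" shows "1 \<le> \<bar>cf_den x\<bar>"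
proof -
  obtain k where k: "cf_den x = of_int k" and b: "snd x \<noteq> 0"
    using assms unfolding cf_form_def by (auto elim!: Ints_cases)
  then have "k \<noteq> 0" using cf_den_nonzero[OF b] by auto
  then have "1 \<le> \<bar>k\<bar>" by arith
  then show ?thesis unfolding k by (metis of_int_1_le_iff of_int_abs)
qed

lemma abs_cf_den_next_le:
  assumes x: "cf_form x" and h: "\<bar>c - fst x\<bar> \<le> h"
  shows "\<bar>cf_den (cf_next x c)\<bar> \<le> \<bar>of_int D\<bar> * of_int Q ^ 2 + h^2 * \<bar>cf_den x\<bar>"
proof -
  have b: "snd x \<noteq> 0" using x unfolding cf_form_def by simp
  have den: "1 \<le> \<bar>cf_den x\<bar>" using abs_cf_den_ge_1[OF x] .
  have "\<bar>cf_den (cf_next x c)\<bar> \<le> \<bar>of_int D * of_int Q ^ 2 / cf_den x\<bar> + \<bar>(c - fst x)^2 * cf_den x\<bar>"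
    unfolding cf_den_next[OF b] by (rule abs_triangle_ineq4)
  also have "\<bar>of_int D * of_int Q ^ 2 / cf_den x\<bar> = \<bar>of_int D\<bar> * of_int Q ^ 2 / \<bar>cf_den x\<bar>"
    by (simp add: abs_mult)
  also have "\<dots> \<le> \<bar>of_int D\<bar> * of_int Q ^ 2 / 1"
    by (rule divide_left_mono) (use den in auto)
  also have "\<bar>(c - fst x)^2 * cf_den x\<bar> \<le> h^2 * \<bar>cf_den x\<bar>"
    using power_mono[OF h abs_ge_zero, of 2] by (simp add: abs_mult mult_right_mono)
  finally show ?thesis by simp
qed

lemma finite_bounded_cf_forms: "finite {x. cf_form x \<and> \<bar>cf_den x\<bar> \<le> B \<and> \<bar>cf_num x\<bar> \<le> B}"
proof -
  define M where "M = \<lceil>B\<rceil>"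
  have "{x. cf_form x \<and> \<bar>cf_den x\<bar> \<le> B \<and> \<bar>cf_num x\<bar> \<le> B} \<subseteq>
      (\<lambda>(i, j). (of_int i / of_int j, of_int Q / of_int j)) ` ({- M..M} \<times> {- M..M})"
  proof
    fix x assume x: "x \<in> {x. cf_form x \<and> \<bar>cf_den x\<bar> \<le> B \<and> \<bar>cf_num x\<bar> \<le> B}"
    then obtain i j where i: "cf_num x = of_int i" and j: "cf_den x = of_int j"
      unfolding cf_form_def by (auto elim!: Ints_cases)
    have b: "snd x \<noteq> 0" using x unfolding cf_form_def by simp
    have "\<bar>i\<bar> \<le> M" "\<bar>j\<bar> \<le> M" using x i j unfolding M_def by (auto simp: le_ceiling_iff)
    moreover have "j \<noteq> 0" using j cf_den_nonzero[OF b] by auto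
    then have "x = (of_int i / of_int j, of_int Q / of_int j)"
      using i j b Q unfolding cf_num_def cf_den_def by (cases x) (simp add: field_simps)
    ultimately show "x \<in> (\<lambda>(i, j). (of_int i / of_int j, of_int Q / of_int j)) ` ({- M..M} \<times> {- M..M})"
      by (intro image_eqI[of _ _ "(i, j)"]) auto
  qed
  then show ?thesis by (rule finite_subset) simp
qed

end

section \<open>Periodicity\<close>

text \<open>The factors 9/4 and 1/4 are the squared distances \<open>(3/2)\<^sup>2\<close> and \<open>(1/2)\<^sup>2\<close> of an \<open>s_bar\<close>
  (for \<open>p \<le> 3\<close>) resp. \<open>t_bar\<close> quotient from the trace; over two steps the factor is at most 9/16.\<close>

lemma alternating_recurrence_bounded:
  fixes X :: "nat \<Rightarrow> rat" and E K :: rat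
  assumes E: "0 \<le> E" and K: "3 * E \<le> K" "X 0 \<le> K"
    and S_step: "\<And>n. S n \<Longrightarrow> X (Suc n) \<le> E + 9/4 * X n"
    and T_step: "\<And>n. \<not> S n \<Longrightarrow> X (Suc n) \<le> E + 1/4 * X n"
    and alternate: "\<And>n. S n \<Longrightarrow> \<not> S (Suc n)"
  shows "X n \<le> E + 9/4 * K"
proof -
  define good where "good n \<longleftrightarrow> X n \<le> K \<or> (\<exists>k. n = Suc k \<and> S k \<and> X k \<le> K)" for n
  have weak: "X n \<le> E + 9/4 * K" if "good n" for n
  proof -
    have "X (Suc k) \<le> E + 9/4 * K" if "S k" "X k \<le> K" for k
      using S_step[OF that(1)] that(2) by simp
    then show ?thesis using that E K unfolding good_def by auto
  qed
  have "good n" for n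
  proof (induction n)
    case 0 then show ?case using K unfolding good_def by simp
  next
    case (Suc n)
    show ?case
    proof (cases "S n")
      case True
      then have "X n \<le> K" using Suc.IH alternate unfolding good_def by blast
      then show ?thesis using True unfolding good_def by blast
    next
      case False
      have "X (Suc n) \<le> 5/4 * E + 9/16 * K" using T_step[OF False] weak[OF Suc.IH] by linarith
      then show ?thesis using E K unfolding good_def by simp
    qed
  qed
  then show ?thesis using weak by blast
qed

lemma cf_ult_periodic_if_repeat:
  assumes nonzero: "\<And>n. snd (cf_alpha D R x n) \<noteq> 0"
    and repeat: "cf_alpha D R x n = cf_alpha D R x m" "n < m"
    and R: "\<And>j. R (n + j) = R (m + j)"
  shows "cf_ult_periodic D R x"
proof -
  have \<alpha>_shift: "cf_alpha D R x (n + j) = cf_alpha D R x (m + j)" for j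
  proof (induction j)
    case 0 then show ?case using repeat(1) by simp
  next
    case (Suc j)
    then show ?case using R[of j] by (simp add: Let_def)
  qed
  have b_shift: "cf_b D R x (n + j) = cf_b D R x (m + j)" for j
    unfolding cf_b_def using \<alpha>_shift[of j] R[of j] by (simp only:)
  have "cf_b D R x (k + (m - n)) = cf_b D R x k" if nk: "n \<le> k" for k
  proof -
    obtain j where j: "k = n + j" using nk le_Suc_ex by blast
    then have "k + (m - n) = m + j" using repeat(2) by simp
    then show ?thesis using b_shift[of j] j by (simp add: add.commute)
  qed
  moreover have "cf_alpha D R x k \<noteq> (cf_b D R x k, 0)" for k using nonzero[of k] by auto
  ultimately show ?thesis unfolding cf_ult_periodic_def using repeat(2)
    by (intro conjI allI exI[of _ n] exI[of _ "m - n"]) auto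
qed

lemma cf_ult_periodic_if_finite_range:
  assumes fin: "finite (range (cf_alpha D R x))"
    and nonzero: "\<And>n. snd (cf_alpha D R x n) \<noteq> 0"
    and R: "\<And>n. R (n + 3) = R (n + 1)"
  shows "cf_ult_periodic D R x"
proof -
  let ?\<alpha> = "cf_alpha D R x"
  have "range (\<lambda>n. (?\<alpha> (Suc n), even n)) \<subseteq> range ?\<alpha> \<times> UNIV"
    by (auto simp del: cf_alpha.simps)
  then have "finite (range (\<lambda>n. (?\<alpha> (Suc n), even n)))"
    by (rule finite_subset) (rule finite_cartesian_product[OF fin finite_UNIV])
  then have "\<not> inj (\<lambda>n. (?\<alpha> (Suc n), even n))" using finite_imageD infinite_UNIV_nat by blast
  then obtain n m where nm: "n < m" "?\<alpha> (Suc n) = ?\<alpha> (Suc m)" "even n = even m"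
    unfolding inj_def by (metis linorder_neqE_nat prod.inject)
  then have "even (m - n)" by (simp add: even_diff_nat)
  then obtain t where "m - n = 2 * t" by (blast elim: evenE)
  then have m: "m = n + 2 * t" using nm(1) by simp
  have R_shift: "R (Suc k + 2 * t) = R (Suc k)" for k
  proof (induction t)
    case (Suc t)
    have "Suc k + 2 * Suc t = k + 2 * t + 3" by simp
    then have "R (Suc k + 2 * Suc t) = R (k + 2 * t + 3)" by (rule arg_cong)
    also have "\<dots> = R (Suc k + 2 * t)" using R[of "k + 2 * t"] by simp
    finally show ?case using Suc.IH by simp
  qed simp
  show ?thesis
  proof (rule cf_ult_periodic_if_repeat[OF nonzero nm(2)])
    show "Suc n < Suc m" using nm(1) by simp
    show "R (Suc n + j) = R (Suc m + j)" for j
    proof -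
      have "Suc m + j = Suc (n + j) + 2 * t" using m by simp
      then have "R (Suc m + j) = R (Suc (n + j))" using R_shift[of "n + j"] by (simp only:)
      then show ?thesis by simp
    qed
  qed
qed
context padic_cf
begin

lemma finite_range_alternating_orbit:
  fixes \<alpha> :: "nat \<Rightarrow> qsqrt" and c :: "nat \<Rightarrow> rat" and S :: "nat \<Rightarrow> bool"
  assumes form: "\<And>n. cf_form (\<alpha> n)" and step: "\<And>n. \<alpha> (Suc n) = cf_next (\<alpha> n) (c n)"
    and near: "\<And>n. \<bar>c n - fst (\<alpha> n)\<bar> \<le> (if S n then 3/2 else 1/2)"
    and alternate: "\<And>n. S n \<Longrightarrow> \<not> S (Suc n)"
  shows "finite (range \<alpha>)"
proof -
  define E :: rat where "E = \<bar>of_int D\<bar> * of_int Q ^ 2"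
  define K where "K = max (3 * E) \<bar>cf_den (\<alpha> 0)\<bar>"
  define B where "B = max (\<bar>cf_num (\<alpha> 0)\<bar>) (3/2 * (E + 9/4 * K))"
  have den: "\<bar>cf_den (\<alpha> n)\<bar> \<le> E + 9/4 * K" for n
  proof (rule alternating_recurrence_bounded[where S = S])
    show "0 \<le> E" "3 * E \<le> K" "\<bar>cf_den (\<alpha> 0)\<bar> \<le> K" unfolding E_def K_def by auto
    show "\<bar>cf_den (\<alpha> (Suc n))\<bar> \<le> E + 9/4 * \<bar>cf_den (\<alpha> n)\<bar>" if "S n" for n
      using abs_cf_den_next_le[OF form[of n], of "c n" "3/2"] near[of n] that
      unfolding step E_def by (simp add: power2_eq_square)
    show "\<bar>cf_den (\<alpha> (Suc n))\<bar> \<le> E + 1/4 * \<bar>cf_den (\<alpha> n)\<bar>" if "\<not> S n" for n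
      using abs_cf_den_next_le[OF form[of n], of "c n" "1/2"] near[of n] that
      unfolding step E_def by (simp add: power2_eq_square)
  qed (rule alternate)
  have num: "\<bar>cf_num (\<alpha> n)\<bar> \<le> B" for n
  proof (cases n)
    case (Suc k)
    have b: "snd (\<alpha> k) \<noteq> 0" using form[of k] unfolding cf_form_def by simp
    have "\<bar>c k - fst (\<alpha> k)\<bar> \<le> 3/2" using near[of k] by (auto split: if_splits)
    then have "\<bar>c k - fst (\<alpha> k)\<bar> * \<bar>cf_den (\<alpha> k)\<bar> \<le> 3/2 * (E + 9/4 * K)"
      using den[of k] by (intro mult_mono) auto
    then have "\<bar>cf_num (\<alpha> n)\<bar> \<le> 3/2 * (E + 9/4 * K)"
      unfolding Suc step cf_num_next[OF b] by (simp only: abs_mult)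
    then show ?thesis unfolding B_def by (rule max.coboundedI2)
  qed (simp add: B_def)
  define M where "M = max B (E + 9/4 * K)"
  have "range \<alpha> \<subseteq> {x. cf_form x \<and> \<bar>cf_den x\<bar> \<le> M \<and> \<bar>cf_num x\<bar> \<le> M}"
  proof
    fix y assume "y \<in> range \<alpha>"
    then obtain n where "y = \<alpha> n" by blast
    then show "y \<in> {x. cf_form x \<and> \<bar>cf_den x\<bar> \<le> M \<and> \<bar>cf_num x\<bar> \<le> M}"
      using form[of n] den[of n] num[of n] unfolding M_def by (simp add: le_max_iff_disj)
  qed
  then show ?thesis using finite_bounded_cf_forms by (rule finite_subset)
qed

text \<open>Since an \<open>s_bar\<close> step makes the valuation negative, \<open>switch\<close> forbids two \<open>s_bar\<close> steps in
  a row. The rule need only be specified at step 0 and at nonpositive valuations, the only ones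
  that occur later; \<open>ruleA\<close> is \<open>undefined\<close> at positive valuations.\<close>

lemma cf_ult_periodic_switching:
  fixes R :: "nat \<Rightarrow> qsqrt \<Rightarrow> rat" and S :: "nat \<Rightarrow> qsqrt \<Rightarrow> bool"
  assumes p: "p \<le> 3" and x: "cf_form x"
    and rule: "\<And>n y. n = 0 \<or> qs_val y \<le> 0 \<Longrightarrow> R n y = (if S n y then s_bar p r y else t_bar p r y)"
    and switch: "\<And>n y y'. S n y \<Longrightarrow> qs_val y' < 0 \<Longrightarrow> \<not> S (Suc n) y'"
    and period: "\<And>n. R (n + 3) = R (n + 1)"
  shows "cf_ult_periodic D R x"
proof -
  let ?\<alpha> = "cf_alpha D R x" and ?b = "cf_b D R x"
  have form: "cf_form (?\<alpha> n) \<and> (n = 0 \<or> qs_val (?\<alpha> n) \<le> 0)" for n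
  proof (induction n)
    case 0 then show ?case using x by simp
  next
    case (Suc n)
    then have "?b n = (if S n (?\<alpha> n) then s_bar p r (?\<alpha> n) else t_bar p r (?\<alpha> n))"
      unfolding cf_b_def using rule by blast
    then show ?case unfolding cf_alpha_Suc
      using cf_form_next_s_bar[of "?\<alpha> n"] cf_form_next_t_bar[of "?\<alpha> n"] Suc.IH by auto
  qed
  have b: "?b n = (if S n (?\<alpha> n) then s_bar p r (?\<alpha> n) else t_bar p r (?\<alpha> n))" for n
    unfolding cf_b_def using rule form by blast
  have snd: "snd (?\<alpha> n) \<noteq> 0" for n using form[of n] unfolding cf_form_def by simp
  have "finite (range ?\<alpha>)"
  proof (rule finite_range_alternating_orbit[where S = "\<lambda>n. S n (?\<alpha> n)"])
    show "cf_form (?\<alpha> n)" for n using form by blast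
    show "?\<alpha> (Suc n) = cf_next (?\<alpha> n) (?b n)" for n by (rule cf_alpha_Suc)
    show "\<bar>?b n - fst (?\<alpha> n)\<bar> \<le> (if S n (?\<alpha> n) then 3/2 else 1/2)" for n
      using s_bar_props(3)[OF snd[of n]] t_bar_props(3)[OF snd[of n]] p unfolding b by auto
    show "\<not> S (Suc n) (?\<alpha> (Suc n))" if "S n (?\<alpha> n)" for n
      using switch[OF that] cf_form_next_s_bar(2)[of "?\<alpha> n"] form[of n] that
      unfolding cf_alpha_Suc b by simp
  qed
  then show ?thesis using snd period by (rule cf_ult_periodic_if_finite_range)
qed

lemma cf_ult_periodic_ruleA:
  assumes "p \<le> 3" shows "cf_ult_periodic D (ruleA p r) (of_int P / of_int Q, 1 / of_int Q)"
proof (rule cf_ult_periodic_switching[where S = "\<lambda>n y. n = 0 \<or> qs_val y = 0", OF assms cf_form_initial])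
  show "ruleA p r n y = (if n = 0 \<or> qs_val y = 0 then s_bar p r y else t_bar p r y)"
    if "n = 0 \<or> qs_val y \<le> 0" for n y
    using that unfolding ruleA_def by auto
  show "ruleA p r (n + 3) = ruleA p r (n + 1)" for n
    by (simp add: fun_eq_iff ruleA_def)
qed simp

lemma cf_ult_periodic_ruleB:
  assumes "p \<le> 3" shows "cf_ult_periodic D (ruleB p r) (of_int P / of_int Q, 1 / of_int Q)"
proof (rule cf_ult_periodic_switching[where S = "\<lambda>n y. even n", OF assms cf_form_initial])
  show "ruleB p r n y = (if even n then s_bar p r y else t_bar p r y)" for n y
    unfolding ruleB_def ..
  show "ruleB p r (n + 3) = ruleB p r (n + 1)" for n
    by (simp add: fun_eq_iff ruleB_def)
qed simp

end

theorem theorem2: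
  fixes p :: nat and P Q D :: int and r :: "nat \<Rightarrow> rat"
  assumes "p \<in> {2, 3}"
    and "Q \<noteq> 0"
    and "\<not> (\<exists>k::int. D = k^2)"
    and "padic_cauchy p r"
    and "padic_tendsto p (\<lambda>m. (r m)^2) (of_int D)"
  shows "cf_ult_periodic D (ruleA p r) (of_int P / of_int Q, 1 / of_int Q) \<and>
         cf_ult_periodic D (ruleB p r) (of_int P / of_int Q, 1 / of_int Q)"
proof -
  interpret padic_cf p r D Q
    using assms by unfold_locales auto
  have "p \<le> 3" using assms(1) by auto
  then show ?thesis using cf_ult_periodic_ruleA cf_ult_periodic_ruleB by blast
qed

end
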